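(* Let $\mathbb{K}\in\{\mathbb{R},\mathbb{C}\}$ and let $\mathcal{X}$ be a separable topological $\mathbb{K}$-vector space whose topological dual $\mathcal{X}^{\ast}$ separates the points of $\mathcal{X}$ and which is a Gateaux-differentiability space. Then for every $0$-neighborhood $\mathcal{U}$ in $\mathcal{X}$, the set $\mathcal{D}_{\mathcal{U}}$ is a $G_\delta$ subset of $\mathbf{CU}_{\mathcal{U}}(\mathcal{X}^{\ast})$ endowed with the weak*-Hausdorff hypertopology.
   Context: Topological vector spaces are Hausdorff; $\mathcal{X}^{\ast}$ carries the weak* topology. $\mathcal{X}$ is a Gateaux-differentiability space if every continuous convex real-valued function whose domain is a nonempty open convex subset of $\mathcal{X}$ is Gateaux-differentiable on a dense subset of that domain. $\mathcal{U}^{\circ}=\{\sigma\in\mathcal{X}^{\ast}:|\sigma(A)|\le1\ \forall A\in\mathcal{U}\}$; $\mathbf{CU}_{\mathcal{U}}(\mathcal{X}^{\ast})$ is the set of nonempty convex weak*-closed subsets of $\mathcal{U}^{\circ}$; $\mathcal{D}_{\mathcal{U}}=\{U\in\mathbf{CU}_{\mathcal{U}}(\mathcal{X}^{\ast}):U=\overline{\mathcal{E}(U)}\}$, where $\mathcal{E}(U)$ is the set of extreme points of $U$ and the closure is weak*. The weak*-Hausdorff hypertopology is generated by the extended pseudometrics $d_H^{(A)}(F,\tilde F)=\max\{\sup_{\sigma\in F}\inf_{\tilde\sigma\in\tilde F}|(\sigma-\tilde\sigma)(A)|,\ \sup_{\tilde\sigma\in\tilde F}\inf_{\sigma\in F}|(\sigma-\tilde\sigma)(A)|\}$,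 $A\in\mathcal{X}$. *)

theory Defs
  imports "HOL-Analysis.Analysis"
begin

definition tvs :: "('k::real_normed_field \<Rightarrow> 'a::ab_group_add \<Rightarrow> 'a) \<Rightarrow> 'a topology \<Rightarrow> bool" where
  "tvs smul T \<longleftrightarrow> vector_space smul \<and> topspace T = UNIV \<and> Hausdorff_space T \<and>
     continuous_map (prod_topology T T) T (\<lambda>(x, y). x + y) \<and>
     continuous_map (prod_topology euclidean T) T (\<lambda>(c, x). smul c x)"

definition dual :: "('k::real_normed_field \<Rightarrow> 'a::ab_group_add \<Rightarrow> 'a) \<Rightarrow> 'a topology \<Rightarrow> ('a \<Rightarrow> 'k) set" where
  "dual smul T = {\<sigma>. Vector_Spaces.linear smul (*) \<sigma> \<and> continuous_map T euclidean \<sigma>}"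

definition weakstar :: "('k::real_normed_field \<Rightarrow> 'a::ab_group_add \<Rightarrow> 'a) \<Rightarrow> 'a topology \<Rightarrow> ('a \<Rightarrow> 'k) topology" where
  "weakstar smul T = subtopology (product_topology (\<lambda>_. euclidean) UNIV) (dual smul T)"

definition dual_separates_points :: "('k::real_normed_field \<Rightarrow> 'a::ab_group_add \<Rightarrow> 'a) \<Rightarrow> 'a topology \<Rightarrow> bool" where
  "dual_separates_points smul T \<longleftrightarrow> (\<forall>x y. x \<noteq> y \<longrightarrow> (\<exists>\<sigma>\<in>dual smul T. \<sigma> x \<noteq> \<sigma> y))"

definition convex_set_tvs :: "('k::real_normed_field \<Rightarrow> 'a::ab_group_add \<Rightarrow> 'a) \<Rightarrow> 'a set \<Rightarrow> bool" where
  "convex_set_tvs smul S \<longleftrightarrow> (\<forall>x\<in>S. \<forall>y\<in>S. \<forall>t::real. 0 \<le> t \<and> t \<le> 1 \<longrightarrow>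
      smul (of_real t) x + smul (of_real (1 - t)) y \<in> S)"

definition convex_fun_tvs :: "('k::real_normed_field \<Rightarrow> 'a::ab_group_add \<Rightarrow> 'a) \<Rightarrow> 'a set \<Rightarrow> ('a \<Rightarrow> real) \<Rightarrow> bool" where
  "convex_fun_tvs smul S f \<longleftrightarrow> (\<forall>x\<in>S. \<forall>y\<in>S. \<forall>t::real. 0 \<le> t \<and> t \<le> 1 \<longrightarrow>
      f (smul (of_real t) x + smul (of_real (1 - t)) y) \<le> t * f x + (1 - t) * f y)"

definition gateaux_differentiable_at :: "('k::real_normed_field \<Rightarrow> 'a::ab_group_add \<Rightarrow> 'a) \<Rightarrow> 'a topology \<Rightarrow> ('a \<Rightarrow> real) \<Rightarrow> 'a \<Rightarrow> bool" where
  "gateaux_differentiable_at smul T f x \<longleftrightarrow>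
     (\<exists>g :: 'a \<Rightarrow> real.
        (\<forall>u v. g (u + v) = g u + g v) \<and> (\<forall>r::real. \<forall>u. g (smul (of_real r) u) = r * g u) \<and>
        continuous_map T euclidean g \<and>
        (\<forall>h. ((\<lambda>t::real. (f (x + smul (of_real t) h) - f x) / t) \<longlongrightarrow> g h) (at 0)))"

definition gateaux_differentiability_space :: "('k::real_normed_field \<Rightarrow> 'a::ab_group_add \<Rightarrow> 'a) \<Rightarrow> 'a topology \<Rightarrow> bool" where
  "gateaux_differentiability_space smul T \<longleftrightarrow>
     (\<forall>S (f :: 'a \<Rightarrow> real). S \<noteq> {} \<and> openin T S \<and> convex_set_tvs smul S \<and>
        convex_fun_tvs smul S f \<and> continuous_map (subtopology T S) euclidean f \<longrightarrow>
        (\<exists>D. D \<subseteq> S \<and> S \<subseteq> T closure_of D \<and> (\<forall>x\<in>D. gateaux_differentiable_at smul T f x)))"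

definition zero_nbhd :: "'a topology \<Rightarrow> 'a::ab_group_add set \<Rightarrow> bool" where
  "zero_nbhd T U \<longleftrightarrow> 0 \<in> T interior_of U"

definition polar :: "('k::real_normed_field \<Rightarrow> 'a::ab_group_add \<Rightarrow> 'a) \<Rightarrow> 'a topology \<Rightarrow> 'a set \<Rightarrow> ('a \<Rightarrow> 'k) set" where
  "polar smul T U = {\<sigma>\<in>dual smul T. \<forall>A\<in>U. norm (\<sigma> A) \<le> 1}"

definition dcomb :: "real \<Rightarrow> ('a \<Rightarrow> 'k::real_normed_field) \<Rightarrow> ('a \<Rightarrow> 'k) \<Rightarrow> ('a \<Rightarrow> 'k)" where
  "dcomb t \<sigma> \<tau> = (\<lambda>A. of_real t * \<sigma> A + of_real (1 - t) * \<tau> A)"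

definition convex_dual :: "('a \<Rightarrow> 'k::real_normed_field) set \<Rightarrow> bool" where
  "convex_dual F \<longleftrightarrow> (\<forall>\<sigma>\<in>F. \<forall>\<tau>\<in>F. \<forall>t::real. 0 \<le> t \<and> t \<le> 1 \<longrightarrow> dcomb t \<sigma> \<tau> \<in> F)"

definition extreme_points :: "('a \<Rightarrow> 'k::real_normed_field) set \<Rightarrow> ('a \<Rightarrow> 'k) set" where
  "extreme_points F = {\<sigma>\<in>F. \<forall>\<tau>\<in>F. \<forall>\<rho>\<in>F. \<forall>t::real. 0 < t \<and> t < 1 \<and> \<sigma> = dcomb t \<tau> \<rho> \<longrightarrow> \<tau> = \<rho>}"

definition CU :: "('k::real_normed_field \<Rightarrow> 'a::ab_group_add \<Rightarrow> 'a) \<Rightarrow> 'a topology \<Rightarrow> 'a set \<Rightarrow> ('a \<Rightarrow> 'k) set set" where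
  "CU smul T U = {F. F \<noteq> {} \<and> F \<subseteq> polar smul T U \<and> convex_dual F \<and> closedin (weakstar smul T) F}"

definition DU :: "('k::real_normed_field \<Rightarrow> 'a::ab_group_add \<Rightarrow> 'a) \<Rightarrow> 'a topology \<Rightarrow> 'a set \<Rightarrow> ('a \<Rightarrow> 'k) set set" where
  "DU smul T U = {F\<in>CU smul T U. F = weakstar smul T closure_of (extreme_points F)}"

definition dH :: "'a \<Rightarrow> ('a \<Rightarrow> 'k::real_normed_field) set \<Rightarrow> ('a \<Rightarrow> 'k) set \<Rightarrow> ereal" where
  "dH A F G = max (SUP \<sigma>\<in>F. INF \<tau>\<in>G. ereal (norm (\<sigma> A - \<tau> A)))
                  (SUP \<tau>\<in>G. INF \<sigma>\<in>F. ereal (norm (\<sigma> A - \<tau> A)))"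

definition weakstar_hausdorff_hypertopology :: "('a \<Rightarrow> 'k::real_normed_field) set topology" where
  "weakstar_hausdorff_hypertopology = topology (\<lambda>W. \<forall>F\<in>W. \<exists>As e. finite As \<and> e > 0 \<and>
      (\<forall>G. (\<forall>A\<in>As. dH A F G < ereal e) \<longrightarrow> G \<in> W))"

end

theory Submission
  imports Defs
begin

text \<open>
  \<open>F \<in> CU\<^sub>U\<close> is the weak* closure of its extreme points iff every basic weak* neighbourhood
  of a point of \<open>F\<close> contains an extreme point. Via the real functionals
  \<open>\<sigma> \<mapsto> re (\<sigma> y)\<close> and a countable dense \<open>D \<subseteq> X\<close>, these neighbourhoods can be replaced, on the
  equicontinuous polar, by countably many boxes \<open>{\<sigma>. \<forall>i. a\<^sub>i < re (\<sigma> y\<^sub>i)}\<close>, each containing the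
  polyhedron \<open>{\<sigma>. \<forall>i. b\<^sub>i \<le> re (\<sigma> y\<^sub>i)}\<close> with \<open>a\<^sub>i < b\<^sub>i\<close> rational.

  For each box, let \<open>W\<close> consist of the sets that either miss the polyhedron with a positive
  margin, or have a cap \<open>{c \<le> re (\<sigma> A)}\<close>, meeting \<open>{c < re (\<sigma> A)}\<close>, that misses each
  half-space \<open>{re (\<sigma> y\<^sub>i) \<le> a\<^sub>i}\<close> with a positive margin. Margins survive small
  perturbations in the pseudometrics \<open>d\<^sub>H\<^sup>(\<^sup>A\<^sup>)\<close>, so \<open>W\<close> is open. If the extreme points of \<open>F\<close>
  are dense and \<open>F\<close> meets the polyhedron, some extreme point lies in the box, and slices around
  an extreme point form a neighbourhood basis, so \<open>F \<in> W\<close>. Conversely, if \<open>F \<in> W\<close>, an extreme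
  point of the face of \<open>F\<close> on which \<open>re (\<sigma> A)\<close> is maximal lies in the box. Hence \<open>D\<^sub>U\<close> is the
  intersection of \<open>CU\<^sub>U\<close> with countably many open sets.
\<close>

lemma nonneg_if_linear_perturbation_nonneg:
  fixes X Q :: real
  assumes "\<And>t. 0 < t \<Longrightarrow> t \<le> 1 \<Longrightarrow> 0 \<le> X + t * Q"
  shows "0 \<le> X"
proof (rule ccontr)
  assume "\<not> 0 \<le> X"
  define t where "t = min 1 (- X / (\<bar>Q\<bar> + 1))"
  have t: "0 < t" "t \<le> 1" "t \<le> - X / (\<bar>Q\<bar> + 1)"
    using \<open>\<not> 0 \<le> X\<close> by (auto simp: t_def divide_neg_pos add_pos_nonneg)
  have "t * Q \<le> - X / (\<bar>Q\<bar> + 1) * \<bar>Q\<bar>"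
    using t by (smt (verit) abs_ge_self abs_not_less_zero mult_left_mono mult_right_mono)
  also have "\<dots> < - X"
    using \<open>\<not> 0 \<le> X\<close> by (simp add: field_simps)
  finally show False
    using assms[OF t(1,2)] by simp
qed

lemma sq_min_diff_le:
  fixes x y c :: real
  assumes "c \<le> y"
  shows "(min (x - c) 0)\<^sup>2 \<le> (x - y)\<^sup>2"
proof (cases "c \<le> x")
  case False
  then have "(c - x)\<^sup>2 \<le> (y - x)\<^sup>2"
    using assms by (intro power_mono) auto
  then show ?thesis
    using False by (simp add: min_def power2_commute)
qed simp

lemma sq_min_convex_comb_le:
  fixes x y s c t :: real
  assumes "c \<le> y" "0 \<le> t" "t \<le> 1"
  shows "(min (t * x + (1 - t) * s - c) 0)\<^sup>2 \<le> (min (s - c) 0 + t * (x - y - min (s - c) 0))\<^sup>2"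
proof -
  define b where "b = t * y + (1 - t) * max s c"
  have "t * c \<le> t * y" "(1 - t) * c \<le> (1 - t) * max s c"
    using assms by (simp_all add: mult_left_mono)
  then have "c \<le> b"
    by (simp add: b_def algebra_simps)
  moreover have "t * x + (1 - t) * s - b = min (s - c) 0 + t * (x - y - min (s - c) 0)"
    by (simp add: b_def min_def max_def algebra_simps)
  ultimately show ?thesis
    using sq_min_diff_le[of c b "t * x + (1 - t) * s"] by simp
qed

lemma convex_comb_eq_upper_bound:
  fixes t x y m :: real
  assumes "0 < t" "t < 1" "x \<le> m" "y \<le> m" "t * x + (1 - t) * y = m"
  shows "x = m" "y = m"
proof -
  have "t * x \<le> t * m" "(1 - t) * y \<le> (1 - t) * m"
    using assms by (simp_all add: mult_left_mono)
  moreover have "t * x + (1 - t) * y = t * m + (1 - t) * m"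
    using assms(5) by (simp add: algebra_simps)
  ultimately have "t * x = t * m" "(1 - t) * y = (1 - t) * m"
    by linarith+
  then show "x = m" "y = m"
    using assms(1,2) by simp_all
qed

lemma split_weight:
  fixes x y :: real
  assumes "0 \<le> x" "0 \<le> y"
  obtains p where "0 \<le> p" "p \<le> 1" "(x + y) * p = x" "(x + y) * (1 - p) = y"
proof (cases "x + y = 0")
  case True
  then show ?thesis
    using assms by (intro that[of 1]) auto
next
  case False
  then show ?thesis
    using assms by (intro that[of "x / (x + y)"]) (auto simp: field_simps)
qed

lemma convex_combination_regroup:
  fixes t s u :: real
  assumes "0 \<le> t" "t \<le> 1" "0 \<le> s" "s \<le> 1" "0 \<le> u" "u \<le> 1"
  obtains \<alpha> p q where "0 \<le> \<alpha>" "\<alpha> \<le> 1" "0 \<le> p" "p \<le> 1" "0 \<le> q" "q \<le> 1"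
    "\<And>a b c d :: 'v::real_vector.
       t *\<^sub>R (s *\<^sub>R a + (1 - s) *\<^sub>R b) + (1 - t) *\<^sub>R (u *\<^sub>R c + (1 - u) *\<^sub>R d) =
       \<alpha> *\<^sub>R (p *\<^sub>R a + (1 - p) *\<^sub>R c) + (1 - \<alpha>) *\<^sub>R (q *\<^sub>R b + (1 - q) *\<^sub>R d)"
proof -
  define \<alpha> where "\<alpha> = t * s + (1 - t) * u"
  have nonneg: "0 \<le> t * s" "0 \<le> (1 - t) * u" "0 \<le> t * (1 - s)" "0 \<le> (1 - t) * (1 - u)"
    using assms by simp_all
  have one_minus: "1 - \<alpha> = t * (1 - s) + (1 - t) * (1 - u)"
    by (simp add: \<alpha>_def algebra_simps)
  obtain p where p: "0 \<le> p" "p \<le> 1" "\<alpha> * p = t * s" "\<alpha> * (1 - p) = (1 - t) * u"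
    using split_weight[OF nonneg(1,2)] unfolding \<alpha>_def by blast
  obtain q where q: "0 \<le> q" "q \<le> 1" "(1 - \<alpha>) * q = t * (1 - s)" "(1 - \<alpha>) * (1 - q) = (1 - t) * (1 - u)"
    using split_weight[OF nonneg(3,4)] unfolding one_minus by blast
  show ?thesis
  proof (rule that)
    show "0 \<le> \<alpha>" "\<alpha> \<le> 1"
      using nonneg one_minus by (simp_all add: \<alpha>_def)
    fix a b c d :: 'v
    have "\<alpha> *\<^sub>R (p *\<^sub>R a + (1 - p) *\<^sub>R c) + (1 - \<alpha>) *\<^sub>R (q *\<^sub>R b + (1 - q) *\<^sub>R d) =
        (\<alpha> * p) *\<^sub>R a + (\<alpha> * (1 - p)) *\<^sub>R c + ((1 - \<alpha>) * q) *\<^sub>R b + ((1 - \<alpha>) * (1 - q)) *\<^sub>R d"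
      by (simp only: scaleR_add_right scaleR_scaleR add.assoc)
    also have "\<dots> = t *\<^sub>R (s *\<^sub>R a + (1 - s) *\<^sub>R b) + (1 - t) *\<^sub>R (u *\<^sub>R c + (1 - u) *\<^sub>R d)"
      unfolding p q by (simp only: scaleR_add_right scaleR_scaleR add_ac)
    finally show "t *\<^sub>R (s *\<^sub>R a + (1 - s) *\<^sub>R b) + (1 - t) *\<^sub>R (u *\<^sub>R c + (1 - u) *\<^sub>R d) =
       \<alpha> *\<^sub>R (p *\<^sub>R a + (1 - p) *\<^sub>R c) + (1 - \<alpha>) *\<^sub>R (q *\<^sub>R b + (1 - q) *\<^sub>R d)" ..
  qed (use p q in auto)
qed

lemma rationals_below:
  fixes v \<eta> :: real
  assumes "\<eta> > 0"
  obtains a b where "a \<in> \<rat>" "b \<in> \<rat>" "v - \<eta> < a" "a < b" "b < v"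
proof -
  obtain a where "a \<in> \<rat>" "v - \<eta> < a" "a < v - \<eta> / 2"
    using Rats_dense_in_real[of "v - \<eta>" "v - \<eta> / 2"] assms by auto
  moreover obtain b where "b \<in> \<rat>" "v - \<eta> / 2 < b" "b < v"
    using Rats_dense_in_real[of "v - \<eta> / 2" v] assms by auto
  ultimately show ?thesis
    using that by simp
qed

lemma subset_Zorn_Inter_nonempty:
  assumes "\<A> \<noteq> {}" and chain_Inter: "\<And>\<C>. \<C> \<noteq> {} \<Longrightarrow> subset.chain \<A> \<C> \<Longrightarrow> \<Inter>\<C> \<in> \<A>"
  obtains M where "M \<in> \<A>" "\<And>X. X \<in> \<A> \<Longrightarrow> X \<subseteq> M \<Longrightarrow> X = M"
proof -
  have "\<exists>M\<in>uminus ` \<A>. \<forall>X\<in>uminus ` \<A>. M \<subseteq> X \<longrightarrow> X = M"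
  proof (rule subset_Zorn_nonempty)
    fix \<C> assume "\<C> \<noteq> {}" "subset.chain (uminus ` \<A>) \<C>"
    then have "uminus ` \<C> \<noteq> {}" "subset.chain \<A> (uminus ` \<C>)"
      by (auto simp: subset_chain_def image_subset_iff)
    then have "\<Inter>(uminus ` \<C>) \<in> \<A>"
      by (rule chain_Inter)
    moreover have "\<Union>\<C> = - \<Inter>(uminus ` \<C>)"
      by auto
    ultimately show "\<Union>\<C> \<in> uminus ` \<A>"
      by blast
  qed (use assms(1) in simp)
  then show ?thesis
    using that by (metis Compl_subset_Compl_iff double_complement imageE image_eqI)
qed

lemma compact_imp_closed_fun:
  fixes S :: "('a \<Rightarrow> 'b::metric_space) set"
  assumes "compact S"
  shows "closed S"
proof -
  have "Hausdorff_space (product_topology (\<lambda>_::'a. (euclidean :: 'b topology)) UNIV)"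
    by (simp add: Hausdorff_space_product_topology)
  then show ?thesis
    using compactin_imp_closedin assms by (fastforce simp: euclidean_product_topology)
qed

lemma compact_Inter_chain:
  fixes \<C> :: "('a \<Rightarrow> 'b::metric_space) set set"
  assumes "\<C> \<noteq> {}" and chain: "\<And>C D. C \<in> \<C> \<Longrightarrow> D \<in> \<C> \<Longrightarrow> C \<subseteq> D \<or> D \<subseteq> C"
    and compact: "\<And>C. C \<in> \<C> \<Longrightarrow> compact C \<and> C \<noteq> {}"
  shows "compact (\<Inter>\<C>)" "\<Inter>\<C> \<noteq> {}"
proof -
  obtain C0 where "C0 \<in> \<C>"
    using assms(1) by blast
  have closed: "closed C" if "C \<in> \<C>" for C
    using compact[OF that] by (simp add: compact_imp_closed_fun)
  have Inter_eq: "C0 \<inter> \<Inter>\<C> = \<Inter>\<C>"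
    using \<open>C0 \<in> \<C>\<close> by blast
  have "compact (C0 \<inter> \<Inter>\<C>)"
    using compact[OF \<open>C0 \<in> \<C>\<close>] closed by (intro compact_Int_closed closed_Inter) auto
  then show "compact (\<Inter>\<C>)"
    using Inter_eq by simp
  have "C0 \<inter> \<Inter>\<C> \<noteq> {}"
  proof (rule compact_imp_fip)
    fix \<F> assume "finite \<F>" "\<F> \<subseteq> \<C>"
    then have "subset.chain \<C> (insert C0 \<F>)"
      using chain \<open>C0 \<in> \<C>\<close> unfolding subset_chain_def by (meson insert_subset subsetD)
    then have "\<Inter>(insert C0 \<F>) \<in> insert C0 \<F>"
      using \<open>finite \<F>\<close> by (intro Inter_in_chain) auto
    then show "C0 \<inter> \<Inter>\<F> \<noteq> {}"
      using compact \<open>C0 \<in> \<C>\<close> \<open>\<F> \<subseteq> \<C>\<close> by auto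
  qed (use compact closed \<open>C0 \<in> \<C>\<close> in auto)
  then show "\<Inter>\<C> \<noteq> {}"
    using Inter_eq by simp
qed

lemma open_fun_contains_cylinder:
  fixes N :: "('a \<Rightarrow> 'b::metric_space) set"
  assumes "open N" "\<sigma> \<in> N"
  obtains I r where "finite I" "r > 0" "\<forall>\<tau>. (\<forall>i\<in>I. dist (\<tau> i) (\<sigma> i) < r) \<longrightarrow> \<tau> \<in> N"
proof -
  have "openin (product_topology (\<lambda>_. euclidean) UNIV) N"
    using assms(1) by (simp add: euclidean_product_topology)
  then obtain V where V: "finite {i. V i \<noteq> UNIV}" "\<And>i. open (V i)" "\<sigma> \<in> PiE UNIV V" "PiE UNIV V \<subseteq> N"
    using assms(2) unfolding openin_product_topology_alt by force
  define I where "I = {i. V i \<noteq> UNIV}"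
  have "\<forall>i. \<exists>r>0. ball (\<sigma> i) r \<subseteq> V i"
    using V(2,3) by (simp add: PiE_iff open_contains_ball)
  then obtain R where R: "\<And>i. R i > 0" "\<And>i. ball (\<sigma> i) (R i) \<subseteq> V i"
    by metis
  define r where "r = Min (insert 1 (R ` I))"
  have "finite I"
    using V(1) by (simp add: I_def)
  moreover have "r > 0"
    using \<open>finite I\<close> R(1) by (simp add: r_def)
  moreover have "\<tau> \<in> N" if "\<forall>i\<in>I. dist (\<tau> i) (\<sigma> i) < r" for \<tau>
  proof -
    have "\<tau> i \<in> V i" for i
    proof (cases "i \<in> I")
      case True
      then have "r \<le> R i"
        using \<open>finite I\<close> by (simp add: r_def)
      then show ?thesis
        using R(2)[of i] that True by (force simp: dist_commute)
    qed (simp add: I_def)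
    then show ?thesis
      using V(4) by (auto simp: PiE_iff)
  qed
  ultimately show ?thesis
    using that by blast
qed

section \<open>Faces and joins of sets of functionals\<close>

lemma dcomb_1 [simp]: "dcomb 1 \<sigma> \<rho> = \<sigma>"
  unfolding dcomb_def by simp

lemma dcomb_0 [simp]: "dcomb 0 \<sigma> \<rho> = \<rho>"
  unfolding dcomb_def by simp

lemma dcomb_same [simp]: "dcomb t \<sigma> \<sigma> = \<sigma>"
  unfolding dcomb_def by (simp add: distrib_right[symmetric])

lemma dcomb_apply: "dcomb t \<sigma> \<rho> A = t *\<^sub>R \<sigma> A + (1 - t) *\<^sub>R \<rho> A"
  unfolding dcomb_def by (simp add: scaleR_conv_of_real)

lemma continuous_on_dcomb: "continuous_on S (\<lambda>(t, \<sigma>, \<rho>). dcomb t \<sigma> \<rho>)"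
proof (rule continuous_on_coordinatewise_then_product)
  fix A
  have "continuous_on S (\<lambda>x. of_real (fst x) * fst (snd x) A + of_real (1 - fst x) * snd (snd x) A)"
    by (intro continuous_intros continuous_on_compose2[OF continuous_on_product_coordinates]) auto
  then show "continuous_on S (\<lambda>x. (case x of (t, \<sigma>, \<rho>) \<Rightarrow> dcomb t \<sigma> \<rho>) A)"
    by (simp add: dcomb_def case_prod_beta)
qed

definition face_dual :: "('a \<Rightarrow> 'k::real_normed_field) set \<Rightarrow> ('a \<Rightarrow> 'k) set \<Rightarrow> bool" where
  "face_dual G F \<longleftrightarrow> G \<subseteq> F \<and>
     (\<forall>\<tau>\<in>F. \<forall>\<rho>\<in>F. \<forall>t. 0 < t \<and> t < 1 \<and> dcomb t \<tau> \<rho> \<in> G \<longrightarrow> \<tau> \<in> G \<and> \<rho> \<in> G)"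

lemma face_dual_trans: "face_dual G H \<Longrightarrow> face_dual H F \<Longrightarrow> face_dual G F"
  unfolding face_dual_def by blast

lemma face_dual_Inter: "\<G> \<noteq> {} \<Longrightarrow> (\<And>G. G \<in> \<G> \<Longrightarrow> face_dual G F) \<Longrightarrow> face_dual (\<Inter>\<G>) F"
  unfolding face_dual_def by blast

lemma extreme_point_if_singleton_face: "face_dual {e} F \<Longrightarrow> e \<in> extreme_points F"
  unfolding face_dual_def extreme_points_def by (auto, metis)

lemma exists_minimal_compact_face:
  fixes G0 :: "('a \<Rightarrow> 'k::real_normed_field) set"
  assumes "compact G0" "G0 \<noteq> {}" "face_dual G0 F"
  obtains M where "M \<subseteq> G0" "M \<noteq> {}" "compact M" "face_dual M F"
    "\<And>G. G \<subseteq> M \<Longrightarrow> G \<noteq> {} \<Longrightarrow> compact G \<Longrightarrow> face_dual G F \<Longrightarrow> G = M"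
proof -
  define \<A> where "\<A> = {G. G \<subseteq> G0 \<and> G \<noteq> {} \<and> compact G \<and> face_dual G F}"
  obtain M where "M \<in> \<A>" "\<And>G. G \<in> \<A> \<Longrightarrow> G \<subseteq> M \<Longrightarrow> G = M"
  proof (rule subset_Zorn_Inter_nonempty)
    show "\<A> \<noteq> {}"
      using assms by (auto simp: \<A>_def)
  next
    fix \<C> assume \<C>: "\<C> \<noteq> {}" "subset.chain \<A> \<C>"
    then have \<C>\<A>: "\<C> \<subseteq> \<A>" and chain: "\<And>C D. C \<in> \<C> \<Longrightarrow> D \<in> \<C> \<Longrightarrow> C \<subseteq> D \<or> D \<subseteq> C"
      by (auto simp: subset_chain_def)
    have "compact (\<Inter>\<C>)" "\<Inter>\<C> \<noteq> {}"
      using compact_Inter_chain[OF \<C>(1) chain] \<C>\<A> by (auto simp: \<A>_def)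
    moreover have "face_dual (\<Inter>\<C>) F"
      using \<C>(1) \<C>\<A> by (intro face_dual_Inter) (auto simp: \<A>_def)
    moreover have "\<Inter>\<C> \<subseteq> G0"
      using \<C>(1) \<C>\<A> by (auto simp: \<A>_def)
    ultimately show "\<Inter>\<C> \<in> \<A>"
      by (simp add: \<A>_def)
  qed blast
  then show ?thesis
    using that[of M] unfolding \<A>_def by (metis (mono_tags, lifting) dual_order.trans mem_Collect_eq)
qed

definition join :: "('a \<Rightarrow> 'k::real_normed_field) set \<Rightarrow> ('a \<Rightarrow> 'k) set \<Rightarrow> ('a \<Rightarrow> 'k) set" where
  "join K L = (\<lambda>(t, \<sigma>, \<rho>). dcomb t \<sigma> \<rho>) ` ({0..1} \<times> K \<times> L)"

lemma compact_join: "compact K \<Longrightarrow> compact L \<Longrightarrow> compact (join K L)"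
  unfolding join_def by (intro compact_continuous_image continuous_on_dcomb compact_Times compact_Icc)

lemma convex_join:
  fixes K L :: "('a \<Rightarrow> 'k::real_normed_field) set"
  assumes "convex_dual K" "convex_dual L"
  shows "convex_dual (join K L)"
  unfolding convex_dual_def
proof (intro ballI allI impI)
  fix x y and t :: real
  assume "x \<in> join K L" "y \<in> join K L" and t: "0 \<le> t \<and> t \<le> 1"
  then obtain s k1 l1 u k2 l2 where
    x: "x = dcomb s k1 l1" "0 \<le> s" "s \<le> 1" "k1 \<in> K" "l1 \<in> L" and
    y: "y = dcomb u k2 l2" "0 \<le> u" "u \<le> 1" "k2 \<in> K" "l2 \<in> L"
    unfolding join_def by auto
  obtain \<alpha> p q where coeffs: "0 \<le> \<alpha>" "\<alpha> \<le> 1" "0 \<le> p" "p \<le> 1" "0 \<le> q" "q \<le> 1" and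
    regroup: "\<And>a b c d :: 'k.
       t *\<^sub>R (s *\<^sub>R a + (1 - s) *\<^sub>R b) + (1 - t) *\<^sub>R (u *\<^sub>R c + (1 - u) *\<^sub>R d) =
       \<alpha> *\<^sub>R (p *\<^sub>R a + (1 - p) *\<^sub>R c) + (1 - \<alpha>) *\<^sub>R (q *\<^sub>R b + (1 - q) *\<^sub>R d)"
    using convex_combination_regroup[of t s u] t x(2,3) y(2,3) by metis
  have "dcomb t x y = dcomb \<alpha> (dcomb p k1 k2) (dcomb q l1 l2)"
    unfolding x(1) y(1) by (rule ext) (simp only: dcomb_apply regroup)
  moreover have "dcomb p k1 k2 \<in> K" "dcomb q l1 l2 \<in> L"
    using assms coeffs x y unfolding convex_dual_def by auto
  ultimately show "dcomb t x y \<in> join K L"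
    unfolding join_def using coeffs by force
qed

lemma join_subset:
  assumes "K \<subseteq> F" "L \<subseteq> F" "convex_dual F"
  shows "join K L \<subseteq> F"
proof
  fix x assume "x \<in> join K L"
  then obtain t k l where "x = dcomb t k l" "0 \<le> t" "t \<le> 1" "k \<in> K" "l \<in> L"
    unfolding join_def by auto
  then show "x \<in> F"
    using assms unfolding convex_dual_def by blast
qed

lemma subset_join_left:
  assumes "L \<noteq> {}"
  shows "K \<subseteq> join K L"
proof
  fix k assume "k \<in> K"
  obtain l where "l \<in> L"
    using assms by blast
  have "(1::real, k, l) \<in> {0..1} \<times> K \<times> L"
    using \<open>k \<in> K\<close> \<open>l \<in> L\<close> by simp
  then show "k \<in> join K L"
    unfolding join_def by (rule image_eqI[rotated]) simp
qed

lemma subset_join_right: "K \<noteq> {} \<Longrightarrow> L \<subseteq> join K L"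
proof
  fix l assume "K \<noteq> {}" "l \<in> L"
  then obtain k where "(0::real, k, l) \<in> {0..1} \<times> K \<times> L"
    by auto
  then show "l \<in> join K L"
    unfolding join_def by (rule image_eqI[rotated]) simp
qed

lemma extreme_point_notin_join:
  assumes "e \<in> extreme_points F" "K \<subseteq> F" "L \<subseteq> F" "e \<notin> K" "e \<notin> L"
  shows "e \<notin> join K L"
proof
  assume "e \<in> join K L"
  then obtain t k l where e: "e = dcomb t k l" "0 \<le> t" "t \<le> 1" "k \<in> K" "l \<in> L"
    unfolding join_def by auto
  consider "t = 0" | "t = 1" | "0 < t \<and> t < 1"
    using e(2,3) by linarith
  then show False
  proof cases
    case 3
    then have "k = l"
      using assms(1-3) e unfolding extreme_points_def by blast
    then show False
      using e assms(4) by simp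
  qed (use e assms(4,5) in simp_all)
qed

lemma compact_convex_superset_avoiding_extreme_point:
  assumes "finite \<K>" "e \<in> extreme_points F" "convex_dual F"
    and "\<And>K. K \<in> \<K> \<Longrightarrow> compact K \<and> convex_dual K \<and> K \<subseteq> F \<and> e \<notin> K"
  shows "\<exists>C. compact C \<and> convex_dual C \<and> C \<subseteq> F \<and> e \<notin> C \<and> \<Union>\<K> \<subseteq> C"
  using assms(1,4)
proof (induction \<K> rule: finite_induct)
  case empty
  show ?case
    by (intro exI[of _ "{}"]) (simp add: convex_dual_def)
next
  case (insert K \<K>)
  have "\<exists>C. compact C \<and> convex_dual C \<and> C \<subseteq> F \<and> e \<notin> C \<and> \<Union>\<K> \<subseteq> C"
    by (rule insert.IH) (simp add: insert.prems)
  then obtain C where C: "compact C" "convex_dual C" "C \<subseteq> F" "e \<notin> C" "\<Union>\<K> \<subseteq> C"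
    by auto
  have K: "compact K" "convex_dual K" "K \<subseteq> F" "e \<notin> K"
    using insert.prems[of K] by simp_all
  show ?case
  proof (cases "K = {} \<or> C = {}")
    case True
    then show ?thesis
    proof
      assume "K = {}"
      then show ?thesis
        using C by (intro exI[of _ C]) simp
    next
      assume "C = {}"
      then show ?thesis
        using K C(5) by (intro exI[of _ K]) auto
    qed
  next
    case False
    then have "K \<union> \<Union>\<K> \<subseteq> join K C"
      using C(5) subset_join_left[of C K] subset_join_right[of K C] by blast
    moreover have "e \<notin> join K C"
      using assms(2) K(3) C(3) K(4) C(4) by (rule extreme_point_notin_join)
    ultimately show ?thesis
      using C K assms(3) by (intro exI[of _ "join K C"]) (simp add: compact_join convex_join join_subset)
  qed
qed

section \<open>The weak*-Hausdorff hypertopology\<close>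

definition dH_near :: "('a \<Rightarrow> 'k::real_normed_field) set \<Rightarrow> (('a \<Rightarrow> 'k) set \<Rightarrow> bool) \<Rightarrow> bool" where
  "dH_near F Q \<longleftrightarrow> (\<exists>As e. finite As \<and> e > 0 \<and> (\<forall>G. (\<forall>A\<in>As. dH A F G < ereal e) \<longrightarrow> Q G))"

lemma dH_near_mono: "dH_near F P \<Longrightarrow> (\<And>G. P G \<Longrightarrow> Q G) \<Longrightarrow> dH_near F Q"
  unfolding dH_near_def by blast

lemma dH_near_conj:
  assumes "dH_near F P" "dH_near F Q"
  shows "dH_near F (\<lambda>G. P G \<and> Q G)"
proof -
  obtain As e Bs e' where
    P: "finite As" "e > 0" "\<And>G. \<forall>A\<in>As. dH A F G < ereal e \<Longrightarrow> P G" and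
    Q: "finite Bs" "e' > 0" "\<And>G. \<forall>A\<in>Bs. dH A F G < ereal e' \<Longrightarrow> Q G"
    using assms unfolding dH_near_def by metis
  have "P G \<and> Q G" if "\<forall>A\<in>As \<union> Bs. dH A F G < ereal (min e e')" for G
    using that P(3) Q(3) by (meson UnCI ereal_less_eq(3) less_le_trans min.cobounded1 min.cobounded2)
  then show ?thesis
    unfolding dH_near_def using P(1,2) Q(1,2) by (metis finite_UnI min_less_iff_conj)
qed

lemma dH_near_Ball:
  "finite I \<Longrightarrow> (\<And>i. i \<in> I \<Longrightarrow> dH_near F (Q i)) \<Longrightarrow> dH_near F (\<lambda>G. \<forall>i\<in>I. Q i G)"
proof (induction I rule: finite_induct)
  case empty
  show ?case
    unfolding dH_near_def by (intro exI[of _ "{}"] exI[of _ 1]) simp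
next
  case (insert i I)
  then show ?case
    using dH_near_conj[of F "Q i"] by simp
qed

lemma openin_weakstar_hausdorff_hypertopology:
  fixes W :: "('a \<Rightarrow> 'k::real_normed_field) set set"
  shows "openin weakstar_hausdorff_hypertopology W \<longleftrightarrow> (\<forall>F\<in>W. dH_near F (\<lambda>G. G \<in> W))"
proof -
  have "istopology (\<lambda>W :: ('a \<Rightarrow> 'k) set set. \<forall>F\<in>W. dH_near F (\<lambda>G. G \<in> W))"
    unfolding istopology_def
  proof (intro conjI allI impI)
    fix S T :: "('a \<Rightarrow> 'k) set set"
    assume "\<forall>F\<in>S. dH_near F (\<lambda>G. G \<in> S)" "\<forall>F\<in>T. dH_near F (\<lambda>G. G \<in> T)"
    then show "\<forall>F\<in>S \<inter> T. dH_near F (\<lambda>G. G \<in> S \<inter> T)"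
      using dH_near_conj by fastforce
  next
    fix \<K> :: "('a \<Rightarrow> 'k) set set set"
    assume "\<forall>S\<in>\<K>. \<forall>F\<in>S. dH_near F (\<lambda>G. G \<in> S)"
    then show "\<forall>F\<in>\<Union>\<K>. dH_near F (\<lambda>G. G \<in> \<Union>\<K>)"
      by (blast intro: dH_near_mono)
  qed
  then show ?thesis
    unfolding weakstar_hausdorff_hypertopology_def dH_near_def by simp
qed

lemma dH_lessD:
  assumes "dH A F G < ereal e"
  shows "\<sigma> \<in> F \<Longrightarrow> \<exists>\<tau>\<in>G. norm (\<sigma> A - \<tau> A) < e" and "\<tau> \<in> G \<Longrightarrow> \<exists>\<sigma>\<in>F. norm (\<sigma> A - \<tau> A) < e"
  using assms unfolding dH_def by (auto simp: INF_less_iff dest!: SUP_lessD)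

section \<open>Separation in the weak* dual\<close>

lemma weakstar_eq_top_of_set: "weakstar smul T = top_of_set (dual smul T)"
  unfolding weakstar_def euclidean_product_topology ..

text \<open>Over \<open>\<real>\<close> take \<open>re = id\<close> and \<open>J = {1}\<close>, over \<open>\<complex>\<close> take \<open>re = Re\<close> and \<open>J = {1, -\<i>}\<close>.
  A scalar is determined by the real parts of its multiples by \<open>J\<close>, so the weak* topology can be
  handled entirely through the real functionals \<open>\<sigma> \<mapsto> re (\<sigma> w)\<close>.\<close>
locale norming_real_parts =
  fixes re :: "'k::real_normed_field \<Rightarrow> real" and J :: "'k set"
  assumes bounded_linear_re: "bounded_linear re"
    and abs_re_le_norm: "\<And>z. \<bar>re z\<bar> \<le> norm z"
    and finite_J: "finite J"
    and norm_le_sum_abs_re: "\<And>z. norm z \<le> (\<Sum>c\<in>J. \<bar>re (c * z)\<bar>)"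
begin

sublocale re: bounded_linear re
  by (rule bounded_linear_re)

lemma re_of_real_mult: "re (of_real r * z) = r * re z"
  using re.scaleR[of r z] by (simp add: scaleR_conv_of_real)

lemma norm_diff_le_if_re_close:
  fixes \<eta> :: real
  assumes "\<And>c. c \<in> J \<Longrightarrow> \<bar>re (c * z) - re (c * w)\<bar> \<le> \<eta>"
  shows "norm (z - w) \<le> real (card J) * \<eta>"
proof -
  have "norm (z - w) \<le> (\<Sum>c\<in>J. \<bar>re (c * (z - w))\<bar>)"
    by (rule norm_le_sum_abs_re)
  also have "\<dots> \<le> (\<Sum>c\<in>J. \<eta>)"
    using assms by (intro sum_mono) (simp add: right_diff_distrib re.diff)
  finally show ?thesis
    by simp
qed

lemma eq_if_re_mult_eq: "(\<And>c. c \<in> J \<Longrightarrow> re (c * z) = re (c * w)) \<Longrightarrow> z = w"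
  using norm_diff_le_if_re_close[of z w 0] by simp

end

locale dual_pairing = norming_real_parts re J
  for re :: "'k::real_normed_field \<Rightarrow> real" and J +
  fixes smul :: "'k \<Rightarrow> 'a::ab_group_add \<Rightarrow> 'a" and T :: "'a topology"
begin

abbreviation Xstar :: "('a \<Rightarrow> 'k) set" where
  "Xstar \<equiv> dual smul T"

definition ell :: "'a \<Rightarrow> ('a \<Rightarrow> 'k) \<Rightarrow> real" where
  "ell w \<sigma> = re (\<sigma> w)"

lemma module_hom_dual: "\<sigma> \<in> Xstar \<Longrightarrow> module_hom smul (*) \<sigma>"
  unfolding dual_def by (simp add: module_hom_iff_linear)

lemma ell_dcomb: "ell w (dcomb t \<sigma> \<rho>) = t * ell w \<sigma> + (1 - t) * ell w \<rho>"
  unfolding ell_def dcomb_def by (simp only: re.add re_of_real_mult)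

lemma ell_0: "\<sigma> \<in> Xstar \<Longrightarrow> ell 0 \<sigma> = 0"
  unfolding ell_def by (simp add: module_hom.zero[OF module_hom_dual] re.zero)

lemma ell_neg: "\<sigma> \<in> Xstar \<Longrightarrow> ell (- w) \<sigma> = - ell w \<sigma>"
  unfolding ell_def by (simp add: module_hom.neg[OF module_hom_dual] re.neg)

lemma ell_smul: "\<sigma> \<in> Xstar \<Longrightarrow> ell (smul c w) \<sigma> = re (c * \<sigma> w)"
  unfolding ell_def by (simp add: module_hom.scale[OF module_hom_dual])

lemma ell_scale: "\<sigma> \<in> Xstar \<Longrightarrow> ell (smul (of_real r) w) \<sigma> = r * ell w \<sigma>"
  using ell_smul[of \<sigma> "of_real r" w] by (simp add: re_of_real_mult ell_def)

lemma ell_sum: "\<sigma> \<in> Xstar \<Longrightarrow> ell (sum f S) \<sigma> = (\<Sum>i\<in>S. ell (f i) \<sigma>)"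
  unfolding ell_def by (simp add: module_hom.sum[OF module_hom_dual] re.sum)

lemma continuous_on_ell: "continuous_on S (ell w)"
  unfolding ell_def by (intro re.continuous_on continuous_on_subset[OF continuous_on_product_coordinates]) simp

lemma abs_ell_diff_le: "\<bar>ell w \<sigma> - ell w \<tau>\<bar> \<le> norm (\<sigma> w - \<tau> w)"
  unfolding ell_def by (metis abs_re_le_norm re.diff)

lemma dual_eq_if_ell_eq:
  assumes "\<sigma> \<in> Xstar" "\<tau> \<in> Xstar" "\<And>w. ell w \<sigma> = ell w \<tau>"
  shows "\<sigma> = \<tau>"
proof
  fix x
  show "\<sigma> x = \<tau> x"
    using assms(3)[of "smul _ x"] by (intro eq_if_re_mult_eq) (simp add: ell_smul assms(1,2))
qed

lemma argmax_face:
  assumes "compact F" "F \<noteq> {}"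
  obtains m where "\<forall>\<sigma>\<in>F. ell w \<sigma> \<le> m" "{\<sigma>\<in>F. ell w \<sigma> = m} \<noteq> {}"
    "compact {\<sigma>\<in>F. ell w \<sigma> = m}" "face_dual {\<sigma>\<in>F. ell w \<sigma> = m} F"
proof -
  obtain s where s: "s \<in> F" "\<forall>\<sigma>\<in>F. ell w \<sigma> \<le> ell w s"
    using continuous_attains_sup[OF assms continuous_on_ell] by blast
  define m where "m = ell w s"
  have "compact (F \<inter> {\<sigma>. ell w \<sigma> = m})"
    using assms(1) by (intro compact_Int_closed closed_Collect_eq continuous_on_ell continuous_on_const)
  moreover have "face_dual {\<sigma>\<in>F. ell w \<sigma> = m} F"
    unfolding face_dual_def
  proof (intro conjI ballI allI impI)
    fix \<tau> \<rho> t assume "\<tau> \<in> F" "\<rho> \<in> F" "0 < t \<and> t < 1 \<and> dcomb t \<tau> \<rho> \<in> {\<sigma>\<in>F. ell w \<sigma> = m}"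
    then have "ell w \<tau> = m" "ell w \<rho> = m"
      using convex_comb_eq_upper_bound[of t "ell w \<tau>" m "ell w \<rho>"] s by (auto simp: ell_dcomb m_def)
    then show "\<tau> \<in> {\<sigma>\<in>F. ell w \<sigma> = m}" "\<rho> \<in> {\<sigma>\<in>F. ell w \<sigma> = m}"
      using \<open>\<tau> \<in> F\<close> \<open>\<rho> \<in> F\<close> by auto
  qed auto
  ultimately show ?thesis
    using that s by (auto simp: m_def Collect_conj_eq)
qed

lemma minimal_compact_face_singleton:
  assumes "F \<subseteq> Xstar" "M \<subseteq> F" "M \<noteq> {}" "compact M" "face_dual M F"
    and minimal: "\<And>G. G \<subseteq> M \<Longrightarrow> G \<noteq> {} \<Longrightarrow> compact G \<Longrightarrow> face_dual G F \<Longrightarrow> G = M"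
  obtains e where "M = {e}"
proof -
  obtain e where "e \<in> M"
    using assms(3) by blast
  have "\<tau> = e" if "\<tau> \<in> M" for \<tau>
  proof (rule dual_eq_if_ell_eq)
    show "\<tau> \<in> Xstar" "e \<in> Xstar"
      using assms(1,2) that \<open>e \<in> M\<close> by auto
    fix w
    obtain m where m: "\<forall>\<sigma>\<in>M. ell w \<sigma> \<le> m" "{\<sigma>\<in>M. ell w \<sigma> = m} \<noteq> {}"
      "compact {\<sigma>\<in>M. ell w \<sigma> = m}" "face_dual {\<sigma>\<in>M. ell w \<sigma> = m} M"
      by (rule argmax_face[OF assms(4,3)])
    have "face_dual {\<sigma>\<in>M. ell w \<sigma> = m} F"
      using m(4) assms(5) by (rule face_dual_trans)
    then have "{\<sigma>\<in>M. ell w \<sigma> = m} = M"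
      using m(2,3) by (intro minimal) auto
    then show "ell w \<tau> = ell w e"
      using that \<open>e \<in> M\<close> by (metis (mono_tags, lifting) mem_Collect_eq)
  qed
  then show ?thesis
    using that \<open>e \<in> M\<close> by blast
qed

lemma compact_face_contains_extreme_point:
  assumes "F \<subseteq> Xstar" "compact G" "G \<noteq> {}" "face_dual G F"
  obtains e where "e \<in> G" "e \<in> extreme_points F"
proof -
  obtain M where M: "M \<subseteq> G" "M \<noteq> {}" "compact M" "face_dual M F"
    "\<And>G'. G' \<subseteq> M \<Longrightarrow> G' \<noteq> {} \<Longrightarrow> compact G' \<Longrightarrow> face_dual G' F \<Longrightarrow> G' = M"
    using exists_minimal_compact_face[OF assms(2-4)] by blast
  moreover have "M \<subseteq> F"
    using M(4) by (simp add: face_dual_def)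
  ultimately obtain e where "M = {e}"
    using minimal_compact_face_singleton[OF assms(1)] by blast
  then have "e \<in> G" "e \<in> extreme_points F"
    using M(1,4) extreme_point_if_singleton_face by auto
  then show ?thesis
    by (rule that)
qed

definition in_polyhedron :: "('a \<times> real) set \<Rightarrow> ('a \<Rightarrow> 'k) \<Rightarrow> bool" where
  "in_polyhedron M \<tau> \<longleftrightarrow> (\<forall>(z, c)\<in>M. c \<le> ell z \<tau>)"

definition strictly_separated :: "('a \<Rightarrow> 'k) set \<Rightarrow> ('a \<times> real) set \<Rightarrow> bool" where
  "strictly_separated G M \<longleftrightarrow> (\<exists>B d \<epsilon>. \<epsilon> > 0 \<and> (\<forall>\<tau>\<in>G. ell B \<tau> \<le> d - \<epsilon>) \<and>
     (\<forall>\<tau>\<in>Xstar. in_polyhedron M \<tau> \<longrightarrow> d \<le> ell B \<tau>))"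

lemma not_in_polyhedron_if_strictly_separated:
  "strictly_separated G M \<Longrightarrow> \<tau> \<in> G \<Longrightarrow> \<tau> \<in> Xstar \<Longrightarrow> \<not> in_polyhedron M \<tau>"
  unfolding strictly_separated_def by force

text \<open>The squared distance from \<open>(ell z \<sigma>)\<^sub>(\<^sub>z\<^sub>,\<^sub>c\<^sub>)\<close> to the orthant \<open>{v. \<forall>(z, c)\<in>M. c \<le> v\<^sub>(\<^sub>z\<^sub>,\<^sub>c\<^sub>)}\<close>.\<close>
definition penalty :: "('a \<times> real) set \<Rightarrow> ('a \<Rightarrow> 'k) \<Rightarrow> real" where
  "penalty M \<sigma> = (\<Sum>p\<in>M. (min (ell (fst p) \<sigma> - snd p) 0)\<^sup>2)"

lemma penalty_pos_iff:
  assumes "finite M"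
  shows "0 < penalty M \<sigma> \<longleftrightarrow> \<not> in_polyhedron M \<sigma>"
proof -
  have "(min (ell (fst p) \<sigma> - snd p) 0)\<^sup>2 = 0 \<longleftrightarrow> snd p \<le> ell (fst p) \<sigma>" for p
    by (auto simp: min_def)
  then have "penalty M \<sigma> = 0 \<longleftrightarrow> in_polyhedron M \<sigma>"
    using assms by (simp add: penalty_def in_polyhedron_def sum_nonneg_eq_0_iff case_prod_beta)
  moreover have "0 \<le> penalty M \<sigma>"
    by (simp add: penalty_def sum_nonneg)
  ultimately show ?thesis
    by auto
qed

text \<open>First-order optimality of a minimiser \<open>\<sigma>s\<close> of the penalty in the direction of \<open>\<sigma>\<close>: the
  point \<open>dcomb t \<sigma> \<sigma>s\<close> is compared with the point of the orthant that combines the coordinates of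
  \<open>\<tau>\<close> and the projection of those of \<open>\<sigma>s\<close> (lemma \<open>sq_min_convex_comb_le\<close>).\<close>
lemma penalty_minimizer_variational_inequality:
  assumes "convex_dual C" "\<sigma>s \<in> C" "\<And>\<sigma>. \<sigma> \<in> C \<Longrightarrow> penalty M \<sigma>s \<le> penalty M \<sigma>"
    and "\<sigma> \<in> C" "in_polyhedron M \<tau>"
  shows "penalty M \<sigma>s \<le> (\<Sum>p\<in>M. min (ell (fst p) \<sigma>s - snd p) 0 * (ell (fst p) \<sigma> - ell (fst p) \<tau>))"
proof -
  define \<delta> where "\<delta> p = min (ell (fst p) \<sigma>s - snd p) 0" for p
  define e where "e p = ell (fst p) \<sigma> - ell (fst p) \<tau>" for p :: "'a \<times> real"
  have penalty_\<sigma>s: "penalty M \<sigma>s = (\<Sum>p\<in>M. (\<delta> p)\<^sup>2)"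
    by (simp add: penalty_def \<delta>_def)
  have "0 \<le> 2 * (\<Sum>p\<in>M. \<delta> p * (e p - \<delta> p)) + t * (\<Sum>p\<in>M. (e p - \<delta> p)\<^sup>2)"
    if t: "0 < t" "t \<le> 1" for t
  proof -
    have "penalty M \<sigma>s \<le> penalty M (dcomb t \<sigma> \<sigma>s)"
      using assms(1,2,4) t by (intro assms(3)) (auto simp: convex_dual_def)
    also have "\<dots> \<le> (\<Sum>p\<in>M. (\<delta> p + t * (e p - \<delta> p))\<^sup>2)"
      unfolding penalty_def
    proof (rule sum_mono)
      fix p assume "p \<in> M"
      then have "snd p \<le> ell (fst p) \<tau>"
        using assms(5) by (auto simp: in_polyhedron_def)
      then show "(min (ell (fst p) (dcomb t \<sigma> \<sigma>s) - snd p) 0)\<^sup>2 \<le> (\<delta> p + t * (e p - \<delta> p))\<^sup>2"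
        using sq_min_convex_comb_le[of "snd p" "ell (fst p) \<tau>" t "ell (fst p) \<sigma>" "ell (fst p) \<sigma>s"] t
        by (simp add: ell_dcomb \<delta>_def e_def)
    qed
    also have "\<dots> = (\<Sum>p\<in>M. (\<delta> p)\<^sup>2 + t * (2 * (\<delta> p * (e p - \<delta> p)) + t * (e p - \<delta> p)\<^sup>2))"
      by (rule sum.cong) (simp_all add: power2_eq_square algebra_simps)
    also have "\<dots> = penalty M \<sigma>s +
        t * (2 * (\<Sum>p\<in>M. \<delta> p * (e p - \<delta> p)) + t * (\<Sum>p\<in>M. (e p - \<delta> p)\<^sup>2))"
      by (simp add: penalty_\<sigma>s sum.distrib sum_distrib_left[symmetric] distrib_left)
    finally show ?thesis
      using t by (simp add: zero_le_mult_iff)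
  qed
  then have "0 \<le> 2 * (\<Sum>p\<in>M. \<delta> p * (e p - \<delta> p))"
    by (rule nonneg_if_linear_perturbation_nonneg)
  then show ?thesis
    by (simp add: penalty_\<sigma>s sum_subtractf right_diff_distrib power2_eq_square \<delta>_def e_def)
qed

lemma strictly_separated_if_disjoint:
  assumes "compact C" "C \<subseteq> Xstar" "convex_dual C" "finite M"
    and disjoint: "\<And>\<sigma>. \<sigma> \<in> C \<Longrightarrow> \<not> in_polyhedron M \<sigma>"
  shows "strictly_separated C M"
proof (cases "C = {}")
  case True
  have "ell 0 \<tau> = 0" if "\<tau> \<in> Xstar" for \<tau>
    using that by (rule ell_0)
  then show ?thesis
    unfolding strictly_separated_def True by (intro exI[of _ 0] exI[of _ 0] exI[of _ 1]) simp
next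
  case False
  have "continuous_on C (penalty M)"
    unfolding penalty_def by (intro continuous_intros continuous_on_ell)
  then obtain \<sigma>s where \<sigma>s: "\<sigma>s \<in> C" "\<And>\<sigma>. \<sigma> \<in> C \<Longrightarrow> penalty M \<sigma>s \<le> penalty M \<sigma>"
    using continuous_attains_inf[OF assms(1) False] by blast
  define \<delta> where "\<delta> p = min (ell (fst p) \<sigma>s - snd p) 0" for p
  \<comment> \<open>\<open>B\<close> realises the displacement from the minimiser to its projection onto the orthant.\<close>
  define B where "B = (\<Sum>p\<in>M. smul (of_real (- \<delta> p)) (fst p))"
  have ell_B: "ell B \<tau> = (\<Sum>p\<in>M. - \<delta> p * ell (fst p) \<tau>)" if "\<tau> \<in> Xstar" for \<tau>
    unfolding B_def ell_sum[OF that] ell_scale[OF that] by simp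
  obtain \<sigma>m where \<sigma>m: "\<sigma>m \<in> C" "\<forall>\<sigma>\<in>C. ell B \<sigma> \<le> ell B \<sigma>m"
    using continuous_attains_sup[OF assms(1) False continuous_on_ell] by blast
  have "0 < penalty M \<sigma>s"
    using penalty_pos_iff[OF assms(4)] disjoint \<sigma>s(1) by blast
  moreover have "ell B \<sigma>m + penalty M \<sigma>s \<le> ell B \<tau>" if "\<tau> \<in> Xstar" "in_polyhedron M \<tau>" for \<tau>
  proof -
    have "penalty M \<sigma>s \<le> (\<Sum>p\<in>M. \<delta> p * (ell (fst p) \<sigma>m - ell (fst p) \<tau>))"
      unfolding \<delta>_def using penalty_minimizer_variational_inequality[OF assms(3) \<sigma>s \<sigma>m(1) that(2)] .
    also have "\<dots> = ell B \<tau> - ell B \<sigma>m"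
      using assms(2) \<sigma>m(1) that(1)
      by (auto simp: ell_B right_diff_distrib sum_subtractf sum_negf)
    finally show ?thesis
      by simp
  qed
  ultimately show ?thesis
    unfolding strictly_separated_def using \<sigma>m(2)
    by (intro exI[of _ B] exI[of _ "ell B \<sigma>m + penalty M \<sigma>s"] exI[of _ "penalty M \<sigma>s"]) auto
qed

lemma convex_dual_halfspace: "convex_dual F \<Longrightarrow> convex_dual {\<sigma>\<in>F. ell y \<sigma> \<le> a}"
  unfolding convex_dual_def
proof (intro ballI allI impI)
  fix \<sigma> \<tau> and t :: real
  assume "\<forall>\<sigma>\<in>F. \<forall>\<tau>\<in>F. \<forall>t. 0 \<le> t \<and> t \<le> 1 \<longrightarrow> dcomb t \<sigma> \<tau> \<in> F"
    and "\<sigma> \<in> {\<sigma>\<in>F. ell y \<sigma> \<le> a}" "\<tau> \<in> {\<sigma>\<in>F. ell y \<sigma> \<le> a}" "0 \<le> t \<and> t \<le> 1"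
  moreover have "t * ell y \<sigma> + (1 - t) * ell y \<tau> \<le> t * a + (1 - t) * a"
    using calculation by (intro add_mono mult_left_mono) auto
  ultimately show "dcomb t \<sigma> \<tau> \<in> {\<sigma>\<in>F. ell y \<sigma> \<le> a}"
    by (simp add: ell_dcomb algebra_simps)
qed

definition pinning :: "('a \<Rightarrow> 'k) \<Rightarrow> 'a set \<Rightarrow> ('a \<times> real) set" where
  "pinning e I = (\<Union>x\<in>I. \<Union>c\<in>J. {(smul c x, ell (smul c x) e), (- smul c x, - ell (smul c x) e)})"

lemma finite_pinning: "finite I \<Longrightarrow> finite (pinning e I)"
  unfolding pinning_def using finite_J by simp

lemma in_polyhedron_pinning_iff:
  assumes "\<tau> \<in> Xstar" "e \<in> Xstar"
  shows "in_polyhedron (pinning e I) \<tau> \<longleftrightarrow> (\<forall>x\<in>I. \<tau> x = e x)"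
proof -
  have "in_polyhedron (pinning e I) \<tau> \<longleftrightarrow> (\<forall>x\<in>I. \<forall>c\<in>J. ell (smul c x) \<tau> = ell (smul c x) e)"
    unfolding pinning_def in_polyhedron_def using assms(1) by (auto simp: ell_neg order_eq_iff)
  also have "\<dots> \<longleftrightarrow> (\<forall>x\<in>I. \<tau> x = e x)"
    using assms by (auto simp: ell_smul intro: eq_if_re_mult_eq)
  finally show ?thesis .
qed

lemma separate_point_from_compact_convex:
  assumes "compact C" "C \<subseteq> Xstar" "convex_dual C" "e \<in> Xstar" "e \<notin> C"
  obtains B d \<epsilon> where "\<epsilon> > 0" "\<forall>\<sigma>\<in>C. ell B \<sigma> \<le> d - \<epsilon>" "d \<le> ell B e"
proof -
  have "open (- C)" "e \<in> - C"
    using assms(1,5) compact_imp_closed_fun by auto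
  then obtain I r where I: "finite I" "r > 0" "\<forall>\<tau>. (\<forall>x\<in>I. dist (\<tau> x) (e x) < r) \<longrightarrow> \<tau> \<in> - C"
    by (rule open_fun_contains_cylinder)
  have "\<not> in_polyhedron (pinning e I) \<sigma>" if "\<sigma> \<in> C" for \<sigma>
    using that I(2) I(3) assms(2,4) by (auto simp: in_polyhedron_pinning_iff)
  then have "strictly_separated C (pinning e I)"
    using assms(1-3) I(1) by (intro strictly_separated_if_disjoint finite_pinning)
  moreover have "in_polyhedron (pinning e I) e"
    using assms(4) by (simp add: in_polyhedron_pinning_iff)
  ultimately show ?thesis
    using that assms(4) unfolding strictly_separated_def by metis
qed

text \<open>Choquet's lemma: the pieces \<open>{\<sigma>\<in>F. ell y \<sigma> \<le> a}\<close> are joined into a compact convex set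
  that still misses the extreme point \<open>e\<close>, and a functional separating \<open>e\<close> from it cuts off the slice.\<close>
lemma extreme_point_slice:
  assumes F: "compact F" "F \<subseteq> Xstar" "convex_dual F" and e: "e \<in> extreme_points F"
    and H: "finite H" "\<And>y a. (y, a) \<in> H \<Longrightarrow> a < ell y e"
  obtains A c where "c < ell A e" "\<forall>(y, a)\<in>H. strictly_separated F {(A, c), (- y, - a)}"
proof -
  define K where "K p = {\<sigma>\<in>F. ell (fst p) \<sigma> \<le> snd p}" for p
  have "e \<in> F"
    using e by (simp add: extreme_points_def)
  have "compact (K p) \<and> convex_dual (K p) \<and> K p \<subseteq> F \<and> e \<notin> K p" if "p \<in> H" for p
  proof -
    have "compact (F \<inter> {\<sigma>. ell (fst p) \<sigma> \<le> snd p})"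
      using F(1) by (intro compact_Int_closed closed_Collect_le continuous_on_ell continuous_on_const)
    then show ?thesis
      using convex_dual_halfspace[OF F(3)] H(2)[of "fst p" "snd p"] that
      by (auto simp: K_def Collect_conj_eq)
  qed
  then have "\<exists>C. compact C \<and> convex_dual C \<and> C \<subseteq> F \<and> e \<notin> C \<and> \<Union>(K ` H) \<subseteq> C"
    using H(1) e F(3) by (intro compact_convex_superset_avoiding_extreme_point) auto
  then obtain C where C: "compact C" "convex_dual C" "C \<subseteq> F" "e \<notin> C" "\<Union>(K ` H) \<subseteq> C"
    by auto
  have "C \<subseteq> Xstar" "e \<in> Xstar"
    using C(3) F(2) \<open>e \<in> F\<close> by auto
  then obtain B d \<epsilon> where sep: "\<epsilon> > 0" "\<forall>\<sigma>\<in>C. ell B \<sigma> \<le> d - \<epsilon>" "d \<le> ell B e"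
    by (rule separate_point_from_compact_convex[OF C(1) _ C(2) _ C(4)])
  have "strictly_separated F {(B, d - \<epsilon> / 2), (- y, - a)}" if "(y, a) \<in> H" for y a
  proof -
    have "\<not> in_polyhedron {(B, d - \<epsilon> / 2), (- y, - a)} \<sigma>" if "\<sigma> \<in> F" for \<sigma>
    proof
      assume "in_polyhedron {(B, d - \<epsilon> / 2), (- y, - a)} \<sigma>"
      then have "\<sigma> \<in> K (y, a)" "d - \<epsilon> / 2 \<le> ell B \<sigma>"
        using that F(2) by (auto simp: in_polyhedron_def K_def ell_neg)
      moreover have "K (y, a) \<subseteq> C"
        using C(5) \<open>(y, a) \<in> H\<close> by blast
      ultimately show False
        using sep(1,2) by fastforce
    qed
    then show ?thesis
      by (intro strictly_separated_if_disjoint F) simp_all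
  qed
  moreover have "d - \<epsilon> / 2 < ell B e"
    using sep(1,3) by simp
  ultimately show ?thesis
    using that by blast
qed

section \<open>Robust separation tests\<close>

lemma dH_near_strictly_separated:
  assumes "strictly_separated F M"
  shows "dH_near F (\<lambda>G. strictly_separated G M)"
proof -
  obtain B d \<epsilon> where sep: "\<epsilon> > 0" "\<forall>\<tau>\<in>F. ell B \<tau> \<le> d - \<epsilon>"
    "\<forall>\<tau>\<in>Xstar. in_polyhedron M \<tau> \<longrightarrow> d \<le> ell B \<tau>"
    using assms unfolding strictly_separated_def by auto
  have "strictly_separated G M" if G: "dH B F G < ereal (\<epsilon> / 2)" for G
  proof -
    have "ell B \<tau> \<le> d - \<epsilon> / 2" if \<tau>: "\<tau> \<in> G" for \<tau>
    proof -
      obtain \<sigma> where "\<sigma> \<in> F" "norm (\<sigma> B - \<tau> B) < \<epsilon> / 2"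
        using dH_lessD(2)[OF G \<tau>] by blast
      then show ?thesis
        using sep(2) abs_ell_diff_le[of B \<tau> \<sigma>] by (force simp: norm_minus_commute)
    qed
    then show ?thesis
      unfolding strictly_separated_def using sep(1,3)
      by (intro exI[of _ B] exI[of _ d] exI[of _ "\<epsilon> / 2"]) auto
  qed
  then show ?thesis
    unfolding dH_near_def using sep(1) by (intro exI[of _ "{B}"] exI[of _ "\<epsilon> / 2"]) auto
qed

lemma dH_near_exists_above:
  assumes "\<sigma> \<in> F" "c < ell A \<sigma>"
  shows "dH_near F (\<lambda>G. \<exists>\<tau>\<in>G. c < ell A \<tau>)"
proof -
  have "\<exists>\<tau>\<in>G. c < ell A \<tau>" if G: "dH A F G < ereal (ell A \<sigma> - c)" for G
  proof -
    obtain \<tau> where "\<tau> \<in> G" "norm (\<sigma> A - \<tau> A) < ell A \<sigma> - c"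
      using dH_lessD(1)[OF G assms(1)] by blast
    then show ?thesis
      using abs_ell_diff_le[of A \<sigma> \<tau>] by (intro bexI[of _ \<tau>]) auto
  qed
  then show ?thesis
    unfolding dH_near_def using assms(2) by (intro exI[of _ "{A}"] exI[of _ "ell A \<sigma> - c"]) auto
qed

text \<open>A triple \<open>(y, a, b)\<close> with \<open>a < b\<close> stands for the nested half-spaces
  \<open>{b \<le> ell y} \<subseteq> {a < ell y}\<close>.\<close>
definition separated_or_capped :: "('a \<times> real \<times> real) set \<Rightarrow> ('a \<Rightarrow> 'k) set set" where
  "separated_or_capped L = {G. strictly_separated G ((\<lambda>(y, a, b). (y, b)) ` L) \<or>
     (\<exists>A c. (\<exists>\<tau>\<in>G. c < ell A \<tau>) \<and> (\<forall>(y, a, b)\<in>L. strictly_separated G {(A, c), (- y, - a)}))}"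

lemma openin_separated_or_capped:
  assumes "finite L"
  shows "openin weakstar_hausdorff_hypertopology (separated_or_capped L)"
  unfolding openin_weakstar_hausdorff_hypertopology
proof
  fix F assume "F \<in> separated_or_capped L"
  then consider (separated) "strictly_separated F ((\<lambda>(y, a, b). (y, b)) ` L)"
    | (capped) A c \<sigma> where "\<sigma> \<in> F" "c < ell A \<sigma>"
        "\<forall>(y, a, b)\<in>L. strictly_separated F {(A, c), (- y, - a)}"
    unfolding separated_or_capped_def by auto
  then show "dH_near F (\<lambda>G. G \<in> separated_or_capped L)"
  proof cases
    case separated
    then show ?thesis
      by (rule dH_near_mono[OF dH_near_strictly_separated]) (simp add: separated_or_capped_def)
  next
    case capped
    have "dH_near F (\<lambda>G. \<forall>(y, a, b)\<in>L. strictly_separated G {(A, c), (- y, - a)})"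
      using assms capped(3) by (intro dH_near_Ball) (auto intro: dH_near_strictly_separated)
    with dH_near_exists_above[OF capped(1,2)]
    have "dH_near F (\<lambda>G. (\<exists>\<tau>\<in>G. c < ell A \<tau>) \<and>
        (\<forall>(y, a, b)\<in>L. strictly_separated G {(A, c), (- y, - a)}))"
      by (rule dH_near_conj)
    then show ?thesis
      by (rule dH_near_mono) (auto simp: separated_or_capped_def)
  qed
qed

lemma extreme_point_above_cap:
  assumes F: "compact F" "F \<subseteq> Xstar" and "\<sigma> \<in> F" "c < ell A \<sigma>"
    and sep: "\<forall>(y, a, b)\<in>L. strictly_separated F {(A, c), (- y, - a)}"
  obtains e where "e \<in> extreme_points F" "\<forall>(y, a, b)\<in>L. a < ell y e"
proof -
  have "F \<noteq> {}"
    using \<open>\<sigma> \<in> F\<close> by blast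
  obtain m where m: "\<forall>\<sigma>\<in>F. ell A \<sigma> \<le> m" "{\<sigma>\<in>F. ell A \<sigma> = m} \<noteq> {}"
    "compact {\<sigma>\<in>F. ell A \<sigma> = m}" "face_dual {\<sigma>\<in>F. ell A \<sigma> = m} F"
    by (rule argmax_face[OF F(1) \<open>F \<noteq> {}\<close>])
  obtain e where e: "e \<in> {\<sigma>\<in>F. ell A \<sigma> = m}" "e \<in> extreme_points F"
    by (rule compact_face_contains_extreme_point[OF F(2) m(3,2,4)])
  then have "c < ell A e" "e \<in> Xstar"
    using m(1) \<open>\<sigma> \<in> F\<close> \<open>c < ell A \<sigma>\<close> F(2) by fastforce+
  have "a < ell y e" if "(y, a, b) \<in> L" for y a b
  proof (rule ccontr)
    assume "\<not> a < ell y e"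
    then have "in_polyhedron {(A, c), (- y, - a)} e"
      using \<open>c < ell A e\<close> \<open>e \<in> Xstar\<close> by (simp add: in_polyhedron_def ell_neg)
    moreover have "strictly_separated F {(A, c), (- y, - a)}"
      using sep that by blast
    ultimately show False
      using e \<open>e \<in> Xstar\<close> not_in_polyhedron_if_strictly_separated by blast
  qed
  then show ?thesis
    using that e(2) by blast
qed

lemma extreme_point_in_box_if_dense:
  assumes F: "F \<subseteq> Xstar" and dense: "F \<subseteq> weakstar smul T closure_of extreme_points F"
    and L: "finite L" "\<forall>(y, a, b)\<in>L. a < b"
    and \<sigma>: "\<sigma> \<in> F" "in_polyhedron ((\<lambda>(y, a, b). (y, b)) ` L) \<sigma>"
  obtains e where "e \<in> extreme_points F" "\<forall>(y, a, b)\<in>L. a < ell y e"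
proof -
  define V where "V = {\<tau>. \<forall>(y, a, b)\<in>L. a < ell y \<tau>}"
  have "V = (\<Inter>p\<in>L. {\<tau>. fst (snd p) < ell (fst p) \<tau>})"
    unfolding V_def by (auto simp: split_def)
  then have "open V"
    using L(1) by (simp add: open_INT open_Collect_less continuous_on_ell)
  have "a < ell y \<sigma>" if "(y, a, b) \<in> L" for y a b
  proof -
    have "(y, b) \<in> (\<lambda>(y, a, b). (y, b)) ` L"
      using that by force
    then have "b \<le> ell y \<sigma>"
      using \<sigma>(2) by (auto simp: in_polyhedron_def)
    moreover have "a < b"
      using L(2) that by auto
    ultimately show ?thesis
      by simp
  qed
  then have "\<sigma> \<in> Xstar \<inter> V"
    using \<sigma>(1) F by (auto simp: V_def)
  moreover have "openin (weakstar smul T) (Xstar \<inter> V)"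
    unfolding weakstar_eq_top_of_set using \<open>open V\<close> by (rule openin_open_Int)
  moreover have "\<sigma> \<in> weakstar smul T closure_of extreme_points F"
    using dense \<sigma>(1) by blast
  ultimately obtain e where "e \<in> extreme_points F" "e \<in> V"
    unfolding in_closure_of by blast
  then show ?thesis
    using that by (simp add: V_def)
qed

lemma separated_or_capped_if_extreme_points_dense:
  assumes F: "compact F" "F \<subseteq> Xstar" "convex_dual F"
    and dense: "F \<subseteq> weakstar smul T closure_of extreme_points F"
    and L: "finite L" "\<forall>(y, a, b)\<in>L. a < b"
  shows "F \<in> separated_or_capped L"
proof (cases "\<exists>\<sigma>\<in>F. in_polyhedron ((\<lambda>(y, a, b). (y, b)) ` L) \<sigma>")
  case False
  then have "strictly_separated F ((\<lambda>(y, a, b). (y, b)) ` L)"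
    using F L(1) by (intro strictly_separated_if_disjoint) auto
  then show ?thesis
    by (simp add: separated_or_capped_def)
next
  case True
  then obtain \<sigma> where "\<sigma> \<in> F" "in_polyhedron ((\<lambda>(y, a, b). (y, b)) ` L) \<sigma>"
    by blast
  then obtain e where e: "e \<in> extreme_points F" "\<forall>(y, a, b)\<in>L. a < ell y e"
    by (rule extreme_point_in_box_if_dense[OF F(2) dense L])
  have "finite ((\<lambda>(y, a, b). (y, a)) ` L)"
    using L(1) by simp
  moreover have "a < ell y e" if "(y, a) \<in> (\<lambda>(y, a, b). (y, a)) ` L" for y a
    using that e(2) by auto
  ultimately obtain A c where A: "c < ell A e"
    "\<forall>(y, a)\<in>(\<lambda>(y, a, b). (y, a)) ` L. strictly_separated F {(A, c), (- y, - a)}"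
    by (rule extreme_point_slice[OF F e(1)])
  have "\<forall>(y, a, b)\<in>L. strictly_separated F {(A, c), (- y, - a)}"
    using A(2) by fastforce
  moreover have "e \<in> F"
    using e(1) by (simp add: extreme_points_def)
  ultimately show ?thesis
    unfolding separated_or_capped_def using A(1) by blast
qed

definition probes :: "'a set \<Rightarrow> 'a set" where
  "probes D = (\<Union>c\<in>J. \<Union>d\<in>D. {smul c d, - smul c d})"

lemma countable_probes: "countable D \<Longrightarrow> countable (probes D)"
  unfolding probes_def by (intro countable_UN countable_finite[OF finite_J]) auto

lemma finite_probes: "finite D \<Longrightarrow> finite (probes D)"
  unfolding probes_def using finite_J by simp

lemma probes_mono: "D \<subseteq> D' \<Longrightarrow> probes D \<subseteq> probes D'"
  unfolding probes_def by blast

lemma norm_diff_le_if_close_on_probes: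
  assumes "\<sigma> \<in> Xstar" "\<tau> \<in> Xstar" "\<And>w. w \<in> probes {d} \<Longrightarrow> ell w \<sigma> - \<eta> < ell w \<tau>"
  shows "norm (\<tau> d - \<sigma> d) \<le> real (card J) * \<eta>"
proof (rule norm_diff_le_if_re_close)
  fix c assume "c \<in> J"
  then have "ell (smul c d) \<sigma> - \<eta> < ell (smul c d) \<tau>" "ell (- smul c d) \<sigma> - \<eta> < ell (- smul c d) \<tau>"
    using assms(3) by (auto simp: probes_def)
  then show "\<bar>re (c * \<tau> d) - re (c * \<sigma> d)\<bar> \<le> \<eta>"
    using assms(1,2) by (simp add: ell_neg ell_smul abs_le_iff)
qed

definition test_family :: "'a set \<Rightarrow> ('a \<times> real \<times> real) set set" where
  "test_family D = {L. finite L \<and> L \<subseteq> probes D \<times> \<rat> \<times> \<rat> \<and> (\<forall>(y, a, b)\<in>L. a < b)}"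

lemma countable_test_family: "countable D \<Longrightarrow> countable (test_family D)"
proof -
  assume "countable D"
  then have "countable (probes D \<times> (\<rat> :: real set) \<times> (\<rat> :: real set))"
    by (intro countable_SIGMA countable_probes countable_rat)
  then have "countable {L. finite L \<and> L \<subseteq> probes D \<times> (\<rat> :: real set) \<times> (\<rat> :: real set)}"
    by (rule countable_Collect_finite_subset)
  then show ?thesis
    unfolding test_family_def by (rule countable_subset[rotated]) blast
qed

lemma extreme_point_in_box_if_separated_or_capped:
  assumes "compact F" "F \<subseteq> Xstar" "F \<in> separated_or_capped L"
    and "\<sigma> \<in> F" "in_polyhedron ((\<lambda>(y, a, b). (y, b)) ` L) \<sigma>"
  obtains e where "e \<in> extreme_points F" "\<forall>(y, a, b)\<in>L. a < ell y e"
proof -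
  have "\<not> strictly_separated F ((\<lambda>(y, a, b). (y, b)) ` L)"
    using assms(2,4,5) not_in_polyhedron_if_strictly_separated by blast
  then obtain A c \<tau> where "\<tau> \<in> F" "c < ell A \<tau>"
    "\<forall>(y, a, b)\<in>L. strictly_separated F {(A, c), (- y, - a)}"
    using assms(3) unfolding separated_or_capped_def by auto
  then show ?thesis
    using that extreme_point_above_cap[OF assms(1,2)] by blast
qed

end

section \<open>The polar of a \<open>0\<close>-neighbourhood\<close>

locale polar_setting = dual_pairing re J smul T
  for re :: "'k::{real_normed_field,heine_borel} \<Rightarrow> real" and J and smul :: "'k \<Rightarrow> 'a::ab_group_add \<Rightarrow> 'a"
    and T +
  fixes U :: "'a set"
  assumes tvs: "tvs smul T" and zero_nbhd_U: "zero_nbhd T U"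
begin

sublocale vs: vector_space smul
  using tvs by (simp add: tvs_def)

abbreviation polarU :: "('a \<Rightarrow> 'k) set" where
  "polarU \<equiv> polar smul T U"

lemma topspace_T: "topspace T = UNIV"
  using tvs by (simp add: tvs_def)

lemma continuous_map_add_const: "continuous_map T T (\<lambda>x. x + a)"
proof -
  have "continuous_map T (prod_topology T T) (\<lambda>x. (x, a))"
    by (intro continuous_map_pairedI continuous_map_id continuous_map_const[THEN iffD2])
       (simp_all add: topspace_T)
  moreover have "continuous_map (prod_topology T T) T (\<lambda>(x, y). x + y)"
    using tvs by (simp add: tvs_def)
  ultimately show ?thesis
    using continuous_map_compose by (force simp: o_def)
qed

lemma continuous_map_smul_right: "continuous_map T T (\<lambda>x. smul c x)"
proof -
  have "continuous_map T (prod_topology euclidean T) (\<lambda>x. (c, x))"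
    by (intro continuous_map_pairedI continuous_map_id continuous_map_const[THEN iffD2]) simp_all
  moreover have "continuous_map (prod_topology euclidean T) T (\<lambda>(c, x). smul c x)"
    using tvs by (simp add: tvs_def)
  ultimately show ?thesis
    using continuous_map_compose by (force simp: o_def)
qed

lemma continuous_map_smul_left: "continuous_map euclidean T (\<lambda>t. smul t x)"
proof -
  have "continuous_map euclidean (prod_topology euclidean T) (\<lambda>t. (t, x))"
    by (intro continuous_map_pairedI continuous_map_id continuous_map_const[THEN iffD2])
       (simp_all add: topspace_T)
  moreover have "continuous_map (prod_topology euclidean T) T (\<lambda>(c, x). smul c x)"
    using tvs by (simp add: tvs_def)
  ultimately show ?thesis
    using continuous_map_compose by (force simp: o_def)
qed

lemma openin_preimage_interior_U: "openin T {x. smul c (x + a) \<in> T interior_of U}"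
proof -
  have "continuous_map T T (\<lambda>x. smul c (x + a))"
    using continuous_map_compose[OF continuous_map_add_const continuous_map_smul_right]
    by (simp add: o_def)
  from openin_continuous_map_preimage[OF this openin_interior_of] show ?thesis
    by (simp add: topspace_T)
qed

lemma absorbing_U: "\<exists>\<delta>>0. \<forall>t. norm t < \<delta> \<longrightarrow> smul t x \<in> U"
proof -
  have "openin euclidean {t. smul t x \<in> T interior_of U}"
    using openin_continuous_map_preimage[OF continuous_map_smul_left openin_interior_of] by simp
  then have "open {t. smul t x \<in> T interior_of U}"
    by simp
  moreover have "0 \<in> {t. smul t x \<in> T interior_of U}"
    using zero_nbhd_U vs.scale_zero_left[of x] by (simp add: zero_nbhd_def)
  ultimately obtain \<delta> where \<delta>: "\<delta> > 0" "ball 0 \<delta> \<subseteq> {t. smul t x \<in> T interior_of U}"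
    by (rule openE)
  have "smul t x \<in> U" if "norm t < \<delta>" for t
  proof -
    have "t \<in> ball 0 \<delta>"
      using that by (simp add: dist_norm)
    then have "smul t x \<in> T interior_of U"
      using \<delta>(2) by blast
    then show ?thesis
      by (rule subsetD[OF interior_of_subset])
  qed
  then show ?thesis
    using \<delta>(1) by blast
qed

lemma polar_subset_dual: "polarU \<subseteq> Xstar"
  unfolding polar_def by auto

lemma norm_le_if_in_polar:
  assumes "\<sigma> \<in> polarU" "\<epsilon> > 0" "smul (of_real (1 / \<epsilon>)) z \<in> U"
  shows "norm (\<sigma> z) \<le> \<epsilon>"
proof -
  have "norm (\<sigma> (smul (of_real (1 / \<epsilon>)) z)) \<le> 1"
    using assms(1,3) unfolding polar_def by blast
  moreover have "\<sigma> (smul (of_real (1 / \<epsilon>)) z) = of_real (1 / \<epsilon>) * \<sigma> z"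
    using assms(1) polar_subset_dual module_hom.scale[OF module_hom_dual] by blast
  ultimately have "norm (of_real (1 / \<epsilon>) * \<sigma> z) \<le> 1"
    by (simp only:)
  then have "(1 / \<epsilon>) * norm (\<sigma> z) \<le> 1"
    using assms(2) by (simp only: norm_mult norm_of_real) simp
  then show ?thesis
    using assms(2) by (simp add: field_simps)
qed

lemma polar_pointwise_bounded: "\<exists>R. \<forall>\<sigma>\<in>polarU. norm (\<sigma> x) \<le> R"
proof -
  obtain \<delta> where "\<delta> > 0" "\<And>t. norm t < \<delta> \<Longrightarrow> smul t x \<in> U"
    using absorbing_U by blast
  then have "smul (of_real (1 / (2 / \<delta>))) x \<in> U"
    by simp
  then show ?thesis
    using norm_le_if_in_polar \<open>\<delta> > 0\<close> by (intro exI[of _ "2 / \<delta>"]) simp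
qed

text \<open>\<open>\<sigma>\<close> maps the neighbourhood \<open>x\<^sub>0 + (\<epsilon>/2) U\<close> of \<open>x\<^sub>0\<close> into \<open>ball (\<sigma> x\<^sub>0) \<epsilon>\<close>.\<close>
lemma continuous_if_bounded_on_U:
  assumes add: "\<And>x y. \<sigma> (x + y) = \<sigma> x + \<sigma> y" and scale: "\<And>c x. \<sigma> (smul c x) = c * \<sigma> x"
    and bounded: "\<And>A. A \<in> U \<Longrightarrow> norm (\<sigma> A) \<le> 1"
  shows "continuous_map T euclidean \<sigma>"
proof -
  have neg: "\<sigma> (- x) = - \<sigma> x" for x
    using add[of x "- x"] add[of 0 0] by (simp add: eq_neg_iff_add_eq_0 add.commute)
  have "openin T {x. \<sigma> x \<in> V}" if "open V" for V
  proof (subst openin_subopen, intro ballI)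
    fix x0 assume "x0 \<in> {x. \<sigma> x \<in> V}"
    then obtain \<epsilon> where \<epsilon>: "\<epsilon> > 0" "ball (\<sigma> x0) \<epsilon> \<subseteq> V"
      using \<open>open V\<close> by (auto elim: openE)
    define N where "N = {x. smul (of_real (2 / \<epsilon>)) (x + - x0) \<in> T interior_of U}"
    have "N \<subseteq> {x. \<sigma> x \<in> V}"
    proof
      fix x assume "x \<in> N"
      then have "smul (of_real (2 / \<epsilon>)) (x + - x0) \<in> U"
        unfolding N_def mem_Collect_eq by (rule subsetD[OF interior_of_subset])
      then have "norm (\<sigma> (smul (of_real (2 / \<epsilon>)) (x + - x0))) \<le> 1"
        by (rule bounded)
      then have "norm (of_real (2 / \<epsilon>) * (\<sigma> x - \<sigma> x0)) \<le> 1"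
        by (simp only: scale add neg diff_conv_add_uminus)
      then have "2 / \<epsilon> * norm (\<sigma> x - \<sigma> x0) \<le> 1"
        using \<epsilon>(1) by (simp only: norm_mult norm_of_real) simp
      then have "norm (\<sigma> x - \<sigma> x0) < \<epsilon>"
        using \<epsilon>(1) by (simp add: field_simps)
      then show "x \<in> {x. \<sigma> x \<in> V}"
        using \<epsilon>(2) by (auto simp: dist_norm norm_minus_commute)
    qed
    moreover have "openin T N"
      unfolding N_def by (rule openin_preimage_interior_U)
    moreover have "x0 \<in> N"
      using zero_nbhd_U by (simp add: N_def zero_nbhd_def)
    ultimately show "\<exists>N. openin T N \<and> x0 \<in> N \<and> N \<subseteq> {x. \<sigma> x \<in> V}"
      by blast
  qed
  then show ?thesis
    unfolding continuous_map_def by (simp add: topspace_T)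
qed

lemma polar_eq: "polarU = {\<sigma>. (\<forall>x y. \<sigma> (x + y) = \<sigma> x + \<sigma> y) \<and> (\<forall>c x. \<sigma> (smul c x) = c * \<sigma> x) \<and>
    (\<forall>A\<in>U. norm (\<sigma> A) \<le> 1)}"
proof -
  have "Vector_Spaces.linear smul (*) \<sigma> \<longleftrightarrow>
      (\<forall>x y. \<sigma> (x + y) = \<sigma> x + \<sigma> y) \<and> (\<forall>c x. \<sigma> (smul c x) = c * \<sigma> x)" for \<sigma>
    by (simp add: Vector_Spaces.linear_iff vs.vector_space_axioms
        vector_space_over_itself.vector_space_axioms)
  then show ?thesis
    unfolding polar_def dual_def using continuous_if_bounded_on_U by auto
qed

lemma closed_polar: "closed polarU"
proof -
  have "closed {\<sigma>::'a \<Rightarrow> 'k. \<forall>x y. \<sigma> (x + y) = \<sigma> x + \<sigma> y}"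
    by (intro closed_Collect_all closed_Collect_eq continuous_intros) simp_all
  moreover have "closed {\<sigma>::'a \<Rightarrow> 'k. \<forall>c x. \<sigma> (smul c x) = c * \<sigma> x}"
    by (intro closed_Collect_all closed_Collect_eq continuous_intros) simp_all
  moreover have "closed {\<sigma>::'a \<Rightarrow> 'k. \<forall>A\<in>U. norm (\<sigma> A) \<le> 1}"
    unfolding Ball_def by (intro closed_Collect_all closed_Collect_imp closed_Collect_le continuous_intros) simp_all
  ultimately show ?thesis
    unfolding polar_eq by (simp add: Collect_conj_eq closed_Int)
qed

lemma compact_polar: "compact polarU"
proof -
  obtain R where R: "\<And>x. \<forall>\<sigma>\<in>polarU. norm (\<sigma> x) \<le> R x"
    using polar_pointwise_bounded by metis
  have "compactin (product_topology (\<lambda>_. euclidean) UNIV) (PiE UNIV (\<lambda>x. cball (0::'k) (R x)))"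
    by (subst compactin_PiE) auto
  then have "compact (PiE UNIV (\<lambda>x. cball (0::'k) (R x)))"
    by (simp add: euclidean_product_topology)
  moreover have "polarU = PiE UNIV (\<lambda>x. cball (0::'k) (R x)) \<inter> polarU"
    using R by auto
  ultimately show ?thesis
    by (metis compact_Int_closed closed_polar)
qed

lemma CU_D:
  assumes "F \<in> CU smul T U"
  shows "F \<noteq> {}" "compact F" "F \<subseteq> Xstar" "convex_dual F"
proof -
  show "F \<noteq> {}" "convex_dual F"
    using assms unfolding CU_def by auto
  have "F \<subseteq> polarU" "closedin (top_of_set Xstar) F"
    using assms unfolding CU_def weakstar_eq_top_of_set by auto
  then obtain C where "closed C" "F = polarU \<inter> C"
    using polar_subset_dual by (auto simp: closedin_closed)
  then show "compact F"
    by (simp add: compact_Int_closed compact_polar)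
  show "F \<subseteq> Xstar"
    using \<open>F \<subseteq> polarU\<close> polar_subset_dual by blast
qed

lemma polar_equicontinuous:
  assumes "T closure_of D = topspace T" "\<epsilon> > 0"
  shows "\<exists>d\<in>D. \<forall>\<tau>\<in>polarU. norm (\<tau> x - \<tau> d) \<le> \<epsilon>"
proof -
  define N where "N = {y. smul (of_real (1 / \<epsilon>)) (y + - x) \<in> T interior_of U}"
  have "openin T N"
    unfolding N_def by (rule openin_preimage_interior_U)
  moreover have "x \<in> N"
    using zero_nbhd_U by (simp add: N_def zero_nbhd_def)
  moreover have "x \<in> T closure_of D"
    using assms(1) by (simp add: topspace_T)
  ultimately obtain d where "d \<in> D" "d \<in> N"
    unfolding in_closure_of by blast
  have "norm (\<tau> x - \<tau> d) \<le> \<epsilon>" if "\<tau> \<in> polarU" for \<tau>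
  proof -
    have "smul (of_real (1 / \<epsilon>)) (d + - x) \<in> U"
      using \<open>d \<in> N\<close> unfolding N_def mem_Collect_eq by (rule subsetD[OF interior_of_subset])
    then have "norm (\<tau> (d + - x)) \<le> \<epsilon>"
      using that assms(2) by (rule norm_le_if_in_polar[rotated 2])
    moreover have "\<tau> \<in> Xstar"
      using that polar_subset_dual by blast
    then have "\<tau> (d + - x) = \<tau> d - \<tau> x"
      by (simp add: module_hom.diff[OF module_hom_dual])
    ultimately show ?thesis
      by (simp add: norm_minus_commute)
  qed
  then show ?thesis
    using \<open>d \<in> D\<close> by blast
qed

section \<open>The \<open>G\<^sub>\<delta>\<close> property\<close>

lemma norm_diff_le_via_probes:
  assumes "\<sigma> \<in> polarU" "\<tau> \<in> polarU" "\<forall>\<rho>\<in>polarU. norm (\<rho> x - \<rho> d) \<le> \<epsilon>"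
    and "\<And>w. w \<in> probes {d} \<Longrightarrow> ell w \<sigma> - \<eta> < ell w \<tau>"
  shows "norm (\<tau> x - \<sigma> x) \<le> 2 * \<epsilon> + real (card J) * \<eta>"
proof -
  have "norm (\<tau> d - \<sigma> d) \<le> real (card J) * \<eta>"
    using assms(1,2,4) polar_subset_dual by (intro norm_diff_le_if_close_on_probes) auto
  moreover have "norm (\<tau> x - \<tau> d) \<le> \<epsilon>" "norm (\<sigma> d - \<sigma> x) \<le> \<epsilon>"
    using assms(1-3) by (auto simp: norm_minus_commute)
  ultimately have "norm (\<tau> x - \<sigma> x) \<le> \<epsilon> + (real (card J) * \<eta> + \<epsilon>)"
    by (meson norm_diff_triangle_le)
  then show ?thesis
    by simp
qed

lemma test_box_in_nbhd:
  assumes D: "T closure_of D = topspace T" and \<sigma>: "\<sigma> \<in> polarU" and N: "open N" "\<sigma> \<in> N"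
  obtains L where "L \<in> test_family D" "in_polyhedron ((\<lambda>(y, a, b). (y, b)) ` L) \<sigma>"
    "\<forall>\<tau>\<in>polarU. (\<forall>(y, a, b)\<in>L. a < ell y \<tau>) \<longrightarrow> \<tau> \<in> N"
proof -
  obtain I r where I: "finite I" "r > 0" "\<forall>\<tau>. (\<forall>i\<in>I. dist (\<tau> i) (\<sigma> i) < r) \<longrightarrow> \<tau> \<in> N"
    using N by (rule open_fun_contains_cylinder)
  define \<eta> where "\<eta> = r / (4 * (real (card J) + 1))"
  have "\<eta> > 0"
    using I(2) by (simp add: \<eta>_def)
  have "real (card J) * \<eta> \<le> r / 4"
    using I(2) by (simp add: \<eta>_def field_simps)
  obtain dd where dd: "\<And>x. dd x \<in> D" "\<And>x. \<forall>\<tau>\<in>polarU. norm (\<tau> x - \<tau> (dd x)) \<le> r / 4"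
    using polar_equicontinuous[OF D, of "r / 4"] I(2) by (metis zero_less_divide_iff zero_less_numeral)
  have "\<forall>w. \<exists>a b. a \<in> \<rat> \<and> b \<in> \<rat> \<and> ell w \<sigma> - \<eta> < a \<and> a < b \<and> b < ell w \<sigma>"
    using rationals_below[OF \<open>\<eta> > 0\<close>] by blast
  then obtain a b where ab: "\<And>w. a w \<in> \<rat> \<and> b w \<in> \<rat> \<and> ell w \<sigma> - \<eta> < a w \<and> a w < b w \<and> b w < ell w \<sigma>"
    by metis
  define L where "L = (\<lambda>w. (w, a w, b w)) ` probes (dd ` I)"
  show ?thesis
  proof (rule that)
    have "probes (dd ` I) \<subseteq> probes D"
      using dd(1) by (intro probes_mono) blast
    then show "L \<in> test_family D"
      using ab I(1) by (auto simp: test_family_def L_def finite_probes)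
    show "in_polyhedron ((\<lambda>(y, a, b). (y, b)) ` L) \<sigma>"
      using ab by (auto simp: in_polyhedron_def L_def less_imp_le)
    show "\<forall>\<tau>\<in>polarU. (\<forall>(y, a, b)\<in>L. a < ell y \<tau>) \<longrightarrow> \<tau> \<in> N"
    proof (intro ballI impI)
      fix \<tau> assume \<tau>: "\<tau> \<in> polarU" and box: "\<forall>(y, a, b)\<in>L. a < ell y \<tau>"
      have "dist (\<tau> x) (\<sigma> x) < r" if "x \<in> I" for x
      proof -
        have "w \<in> probes {dd x} \<Longrightarrow> ell w \<sigma> - \<eta> < ell w \<tau>" for w
          using box ab[of w] that probes_mono[of "{dd x}" "dd ` I"] by (fastforce simp: L_def)
        then have "norm (\<tau> x - \<sigma> x) \<le> 2 * (r / 4) + real (card J) * \<eta>"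
          by (rule norm_diff_le_via_probes[OF \<sigma> \<tau> dd(2)])
        then show ?thesis
          using I(2) \<open>real (card J) * \<eta> \<le> r / 4\<close> by (simp add: dist_norm)
      qed
      then show "\<tau> \<in> N"
        using I(3) by blast
    qed
  qed
qed

lemma extreme_points_dense_if_tested:
  assumes D: "T closure_of D = topspace T" and F: "F \<in> CU smul T U"
    and tested: "\<forall>L\<in>test_family D. F \<in> separated_or_capped L"
  shows "F \<subseteq> weakstar smul T closure_of extreme_points F"
proof
  fix \<sigma> assume "\<sigma> \<in> F"
  have FP: "F \<subseteq> polarU"
    using F by (simp add: CU_def)
  show "\<sigma> \<in> weakstar smul T closure_of extreme_points F"
    unfolding in_closure_of weakstar_eq_top_of_set
  proof (intro conjI allI impI)
    show "\<sigma> \<in> topspace (top_of_set Xstar)"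
      using \<open>\<sigma> \<in> F\<close> CU_D(3)[OF F] by auto
    fix N assume "\<sigma> \<in> N \<and> openin (top_of_set Xstar) N"
    then obtain N' where N': "open N'" "N = Xstar \<inter> N'" "\<sigma> \<in> N'"
      by (auto simp: openin_open)
    obtain L where L: "L \<in> test_family D" "in_polyhedron ((\<lambda>(y, a, b). (y, b)) ` L) \<sigma>"
      "\<forall>\<tau>\<in>polarU. (\<forall>(y, a, b)\<in>L. a < ell y \<tau>) \<longrightarrow> \<tau> \<in> N'"
      using test_box_in_nbhd[OF D subsetD[OF FP \<open>\<sigma> \<in> F\<close>] N'(1,3)] by blast
    obtain e where e: "e \<in> extreme_points F" "\<forall>(y, a, b)\<in>L. a < ell y e"
    proof (rule extreme_point_in_box_if_separated_or_capped)
      show "compact F" "F \<subseteq> Xstar"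
        using CU_D(2,3)[OF F] .
      show "F \<in> separated_or_capped L"
        using tested L(1) by blast
    qed (use \<open>\<sigma> \<in> F\<close> L(2) in auto)
    have "e \<in> polarU"
      using e(1) FP by (auto simp: extreme_points_def)
    then have "e \<in> Xstar" "e \<in> N'"
      using e(2) L(3) subsetD[OF polar_subset_dual] by auto
    then have "e \<in> N"
      using N'(2) by blast
    then show "\<exists>e. e \<in> extreme_points F \<and> e \<in> N"
      using e(1) by blast
  qed
qed

lemma DU_eq_Inter_separated_or_capped:
  assumes "T closure_of D = topspace T"
  shows "DU smul T U = CU smul T U \<inter> \<Inter>(separated_or_capped ` test_family D)"
proof (intro equalityI subsetI)
  fix F assume "F \<in> DU smul T U"
  then have F: "F \<in> CU smul T U" "F = weakstar smul T closure_of extreme_points F"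
    by (auto simp: DU_def)
  have "F \<in> separated_or_capped L" if "L \<in> test_family D" for L
    using CU_D(2-4)[OF F(1)] F(2) that
    by (intro separated_or_capped_if_extreme_points_dense) (auto simp: test_family_def)
  then show "F \<in> CU smul T U \<inter> \<Inter>(separated_or_capped ` test_family D)"
    using F(1) by blast
next
  fix F assume "F \<in> CU smul T U \<inter> \<Inter>(separated_or_capped ` test_family D)"
  then have F: "F \<in> CU smul T U" "\<forall>L\<in>test_family D. F \<in> separated_or_capped L"
    by auto
  have "weakstar smul T closure_of extreme_points F \<subseteq> F"
    using F(1) by (intro closure_of_minimal) (auto simp: CU_def extreme_points_def)
  moreover have "F \<subseteq> weakstar smul T closure_of extreme_points F"
    using assms F by (rule extreme_points_dense_if_tested)
  ultimately show "F \<in> DU smul T U"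
    using F(1) by (auto simp: DU_def)
qed

theorem gdelta_in_DU:
  assumes "separable_space T"
  shows "gdelta_in (subtopology weakstar_hausdorff_hypertopology (CU smul T U)) (DU smul T U)"
proof -
  obtain D where D: "countable D" "T closure_of D = topspace T"
    using assms by (auto simp: separable_space_def)
  have "gdelta_in weakstar_hausdorff_hypertopology (separated_or_capped L)" if "L \<in> test_family D" for L
    using that by (intro open_imp_gdelta_in openin_separated_or_capped) (simp add: test_family_def)
  moreover have "{} \<in> test_family D"
    by (simp add: test_family_def)
  ultimately have "gdelta_in weakstar_hausdorff_hypertopology (\<Inter>(separated_or_capped ` test_family D))"
    using D(1) by (intro gdelta_in_Inter countable_image countable_test_family) auto
  then show ?thesis
    unfolding gdelta_in_subtopology DU_eq_Inter_separated_or_capped[OF D(2)] by blast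
qed

end

lemma norming_real_parts_real: "norming_real_parts (\<lambda>x::real. x) {1}"
  unfolding norming_real_parts_def by (simp add: bounded_linear_ident)

lemma norming_real_parts_complex: "norming_real_parts Re {1, - \<i>}"
proof -
  have "norm z \<le> (\<Sum>c\<in>{1, - \<i>}. \<bar>Re (c * z)\<bar>)" for z
  proof -
    have "(1::complex) \<noteq> - \<i>"
      by (simp add: complex_eq_iff)
    then have "(\<Sum>c\<in>{1, - \<i>}. \<bar>Re (c * z)\<bar>) = \<bar>Re z\<bar> + \<bar>Im z\<bar>"
      by simp
    then show ?thesis
      using cmod_le[of z] by simp
  qed
  then show ?thesis
    unfolding norming_real_parts_def by (simp add: bounded_linear_Re abs_Re_le_cmod)
qed

lemma gdelta_in_DU_if_separable:
  fixes re :: "'k::{real_normed_field,heine_borel} \<Rightarrow> real" and smul :: "'k \<Rightarrow> 'a::ab_group_add \<Rightarrow> 'a"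
  assumes "norming_real_parts re J" "tvs smul T" "separable_space T" "zero_nbhd T U"
  shows "gdelta_in (subtopology weakstar_hausdorff_hypertopology (CU smul T U)) (DU smul T U)"
proof -
  interpret polar_setting re J smul T U
    using assms by (simp add: polar_setting_def polar_setting_axioms_def dual_pairing_def)
  show ?thesis
    using assms(3) by (rule gdelta_in_DU)
qed

theorem theorem4p9:
  fixes smulR :: "real \<Rightarrow> 'a::ab_group_add \<Rightarrow> 'a" and TR :: "'a topology"
    and smulC :: "complex \<Rightarrow> 'b::ab_group_add \<Rightarrow> 'b" and TC :: "'b topology"
  shows "(tvs smulR TR \<and> separable_space TR \<and> dual_separates_points smulR TR \<and>
            gateaux_differentiability_space smulR TR \<longrightarrow>
          (\<forall>U. zero_nbhd TR U \<longrightarrow>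
             gdelta_in (subtopology weakstar_hausdorff_hypertopology (CU smulR TR U))
                       (DU smulR TR U))) \<and>
         (tvs smulC TC \<and> separable_space TC \<and> dual_separates_points smulC TC \<and>
            gateaux_differentiability_space smulC TC \<longrightarrow>
          (\<forall>U. zero_nbhd TC U \<longrightarrow>
             gdelta_in (subtopology weakstar_hausdorff_hypertopology (CU smulC TC U))
                       (DU smulC TC U)))"
  using gdelta_in_DU_if_separable[OF norming_real_parts_real, of smulR TR]
    gdelta_in_DU_if_separable[OF norming_real_parts_complex, of smulC TC]
  by blast

end
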